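(* Under the standing assumptions, $H_{++}\subset\mathcal{D}(V)$ and $$\mathcal{D}(V)=\{\eta\in H_+ \,:\, 0\in\mathcal{C}(\eta)\},$$ where $0$ denotes the identically zero control.
   Context: Fix $T>0$, $r>0$, $\rho>0$. $L^2_{-T}:=L^2([-T,0];\mathbb{R})$, $W^{1,2}_{-T}:=W^{1,2}([-T,0];\mathbb{R})$, $H:=\mathbb{R}\times L^2_{-T}$ with elements $\eta=(\eta_0,\eta_1)$, $H_+:=(0,+\infty)\times L^2_{-T}$, $H_{++}:=(0,+\infty)\times\{\eta_1\in L^2_{-T}:\eta_1\ge 0 \text{ a.e.}\}$. Standing assumptions: $a\in W^{1,2}_{-T}$, $a\ge0$, $a(-T)=0$; $f_0:[0,\infty)\times\mathbb{R}\to\mathbb{R}$ jointly concave, nondecreasing in its second variable, Lipschitz with constant $C_{f_0}$, $f_0(0,y)>0$ for all $y>0$, extended to $\mathbb{R}^2$ by $f_0(x,y):=f_0(0,y)$ for $x<0$; $U_1\in C([0,\infty))\cap C^2((0,\infty))$ with $U_1'>0$, $U_1'(0^+)=+\infty$, $U_1''<0$, $U_1$ bounded; $U_2\in C((0,\infty))$ increasing, concave, bounded above, with $\int_0^\infty e^{-\rho t}U_2(e^{-C_{f_0}t})dt>-\infty$. For $\eta\in H_+$ and $c\in L^1_{loc}([0,\infty);[0,\infty))$, $x(\cdot;\eta,c)$ is the unique function $x:[-T,\infty)\to\mathbb{R}$, continuous on $[0,\infty)$, with $x=\eta_1$ a.e. on $[-T,0)$ and $x(t)=\eta_0+\int_0^t[r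 x(s)+f_0(x(s),\int_{-T}^0a(\xi)x(s+\xi)d\xi)-c(s)]ds$ for $t\ge 0$. Admissible controls: $\mathcal{C}(\eta):=\{c\in L^1_{loc}([0,\infty);[0,\infty)) : x(t;\eta,c)>0\ \forall t\ge0\}$. Objective $J(\eta;c):=\int_0^\infty e^{-\rho t}[U_1(c(t))+U_2(x(t;\eta,c))]dt$, value function $V(\eta):=\sup_{c\in\mathcal{C}(\eta)}J(\eta;c)$ (with $\sup\emptyset=-\infty$), and $\mathcal{D}(V):=\{\eta\in H_+: V(\eta)>-\infty\}$. *)

theory Defs
  imports "HOL-Analysis.Analysis"
begin

text \<open>Square integrable functions on [-T,0] (representatives of elements of L^2).\<close>
definition L2 :: "real \<Rightarrow> (real \<Rightarrow> real) \<Rightarrow> bool" where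
  "L2 T g \<longleftrightarrow> set_borel_measurable lborel {-T..0} g \<and>
     set_integrable lborel {-T..0} (\<lambda>\<xi>. (g \<xi>)^2)"

text \<open>W^{1,2}([-T,0]): absolutely continuous with L^2 weak derivative.\<close>
definition W12 :: "real \<Rightarrow> (real \<Rightarrow> real) \<Rightarrow> bool" where
  "W12 T a \<longleftrightarrow> (\<exists>a'. L2 T a' \<and>
     (\<forall>t\<in>{-T..0}. a t = a (-T) + (LINT s:{-T..t}|lborel. a' s)))"

definition Hplus :: "real \<Rightarrow> (real \<times> (real \<Rightarrow> real)) set" where
  "Hplus T = {\<eta>. fst \<eta> > 0 \<and> L2 T (snd \<eta>)}"

definition Hpp :: "real \<Rightarrow> (real \<times> (real \<Rightarrow> real)) set" where
  "Hpp T = {\<eta> \<in> Hplus T. AE \<xi> in lborel. \<xi> \<in> {-T..0} \<longrightarrow> 0 \<le> snd \<eta> \<xi>}"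

definition eint :: "(real \<Rightarrow> real) \<Rightarrow> real set \<Rightarrow> ereal" where
  "eint g S = enn2ereal (\<integral>\<^sup>+ t. indicator S t * ennreal (g t) \<partial>lborel)
             - enn2ereal (\<integral>\<^sup>+ t. indicator S t * ennreal (- g t) \<partial>lborel)"

text \<open>The state equation. The state is fixed pointwise to eta_1 on [-T,0) and to 0 before -T
  (this only selects a canonical representative, the integrals see only the a.e. class).\<close>
definition state_eq ::
  "real \<Rightarrow> real \<Rightarrow> (real \<Rightarrow> real) \<Rightarrow> (real \<Rightarrow> real \<Rightarrow> real) \<Rightarrow> real \<times> (real \<Rightarrow> real)
    \<Rightarrow> (real \<Rightarrow> real) \<Rightarrow> (real \<Rightarrow> real) \<Rightarrow> bool" where
  "state_eq T r a f0 \<eta> c x \<longleftrightarrow>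
     (\<forall>t < - T. x t = 0) \<and> (\<forall>t\<in>{-T..<0}. x t = snd \<eta> t) \<and> continuous_on {0..} x \<and>
     (\<forall>t\<ge>0. set_integrable lborel {0..t}
                (\<lambda>s. r * x s + f0 (x s) (LINT \<xi>:{-T..0}|lborel. a \<xi> * x (s + \<xi>)) - c s) \<and>
              x t = fst \<eta> + (LINT s:{0..t}|lborel.
                r * x s + f0 (x s) (LINT \<xi>:{-T..0}|lborel. a \<xi> * x (s + \<xi>)) - c s))"

definition state ::
  "real \<Rightarrow> real \<Rightarrow> (real \<Rightarrow> real) \<Rightarrow> (real \<Rightarrow> real \<Rightarrow> real) \<Rightarrow> real \<times> (real \<Rightarrow> real)
    \<Rightarrow> (real \<Rightarrow> real) \<Rightarrow> real \<Rightarrow> real" where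
  "state T r a f0 \<eta> c = (THE x. state_eq T r a f0 \<eta> c x)"

definition ctrl :: "(real \<Rightarrow> real) \<Rightarrow> bool" where
  "ctrl c \<longleftrightarrow> (\<forall>t\<ge>0. 0 \<le> c t) \<and> (\<forall>t\<ge>0. set_integrable lborel {0..t} c)"

definition admissible ::
  "real \<Rightarrow> real \<Rightarrow> (real \<Rightarrow> real) \<Rightarrow> (real \<Rightarrow> real \<Rightarrow> real) \<Rightarrow> real \<times> (real \<Rightarrow> real)
    \<Rightarrow> (real \<Rightarrow> real) set" where
  "admissible T r a f0 \<eta> = {c. ctrl c \<and> (\<forall>t\<ge>0. state T r a f0 \<eta> c t > 0)}"

definition J ::
  "real \<Rightarrow> real \<Rightarrow> real \<Rightarrow> (real \<Rightarrow> real) \<Rightarrow> (real \<Rightarrow> real \<Rightarrow> real) \<Rightarrow> (real \<Rightarrow> real)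
    \<Rightarrow> (real \<Rightarrow> real) \<Rightarrow> real \<times> (real \<Rightarrow> real) \<Rightarrow> (real \<Rightarrow> real) \<Rightarrow> ereal" where
  "J T r \<rho> a f0 U1 U2 \<eta> c =
     eint (\<lambda>t. exp (- \<rho> * t) * (U1 (c t) + U2 (state T r a f0 \<eta> c t))) {0..}"

definition V ::
  "real \<Rightarrow> real \<Rightarrow> real \<Rightarrow> (real \<Rightarrow> real) \<Rightarrow> (real \<Rightarrow> real \<Rightarrow> real) \<Rightarrow> (real \<Rightarrow> real)
    \<Rightarrow> (real \<Rightarrow> real) \<Rightarrow> real \<times> (real \<Rightarrow> real) \<Rightarrow> ereal" where
  "V T r \<rho> a f0 U1 U2 \<eta> = (SUP c \<in> admissible T r a f0 \<eta>. J T r \<rho> a f0 U1 U2 \<eta> c)"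

definition DV ::
  "real \<Rightarrow> real \<Rightarrow> real \<Rightarrow> (real \<Rightarrow> real) \<Rightarrow> (real \<Rightarrow> real \<Rightarrow> real) \<Rightarrow> (real \<Rightarrow> real)
    \<Rightarrow> (real \<Rightarrow> real) \<Rightarrow> (real \<times> (real \<Rightarrow> real)) set" where
  "DV T r \<rho> a f0 U1 U2 = {\<eta> \<in> Hplus T. V T r \<rho> a f0 U1 U2 \<eta> > -\<infinity>}"

end

theory Submission
  imports Defs
begin

(* Since the state is defined by a definite description, the file first establishes
   well-posedness of the state equation (locale dde): the right-hand side is Lipschitz
   with respect to the sup-norm on [0,s], so the k-th Picard iterate contracts by
   (Lc N)^k/k! on [0,N]; Banach's fixed point theorem gives solutions on every [0,N],
   the same estimate gives uniqueness, and the local solutions glue to a global one.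
   Three properties of solutions follow, each from one barrier lemma
   (positivity_barrier): positivity for nonnegative data and zero control, the
   comparison x(\<eta>;c) \<le> x(\<eta>;0), and the lower bound x(\<eta>;0)(t) \<ge> exp(-Cf t) for large t
   when the zero control is admissible.
   The theorem then follows from three inclusions: H++ \<subseteq> {0 admissible} by positivity,
   {0 admissible} \<subseteq> D(V) since J(\<eta>;0) is bounded below through the integrability
   hypothesis on U2, and D(V) \<subseteq> {0 admissible} by comparison. *)

lemma abs_le_one_plus_square: "\<bar>y::real\<bar> \<le> 1 + y\<^sup>2"
proof -
  have "0 \<le> (\<bar>y\<bar> - 1)\<^sup>2" by simp
  hence "2 * \<bar>y\<bar> \<le> \<bar>y\<bar> * \<bar>y\<bar> + 1" by (simp add: power2_eq_square algebra_simps)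
  thus ?thesis by (simp add: power2_eq_square abs_mult_self_eq)
qed

lemma const_set_integrable: "set_integrable lborel {l..u::real} (\<lambda>_. c::real)"
  unfolding set_integrable_def
  by (rule borel_integrable_compact) (auto intro: continuous_intros)

lemma L2_set_integrable:
  assumes "L2 T g"
  shows "set_integrable lborel {-T..0} g"
proof (rule set_integrable_bound[where f="\<lambda>x. 1 + (g x)\<^sup>2"])
  show "set_integrable lborel {-T..0} (\<lambda>x. 1 + (g x)\<^sup>2)"
    using assms unfolding L2_def by (intro set_integral_add const_set_integrable) auto
  show "set_borel_measurable lborel {-T..0} g" using assms unfolding L2_def by simp
  show "AE x\<in>{-T..0} in lborel. norm (g x) \<le> norm (1 + (g x)\<^sup>2)"
    using abs_le_one_plus_square by (intro AE_I2 impI) simp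
qed

lemma W12_continuous:
  assumes "W12 T a"
  shows "continuous_on {-T..0} a"
proof -
  obtain a' where L: "L2 T a'" and eq: "\<forall>t\<in>{-T..0}. a t = a (-T) + (LINT s:{-T..t}|lborel. a' s)"
    using assms unfolding W12_def by blast
  have si: "set_integrable lborel {-T..0} a'" by (rule L2_set_integrable[OF L])
  have "a (-T) + integral {-T..t} a' = a t" if "t \<in> {-T..0}" for t
  proof -
    have "(LINT s:{-T..t}|lborel. a' s) = integral {-T..t} a'"
      by (rule set_borel_integral_eq_integral(2)[OF set_integrable_subset[OF si]]) (use that in auto)
    moreover have "a t = a (-T) + (LINT s:{-T..t}|lborel. a' s)" using eq that by blast
    ultimately show ?thesis by linarith
  qed
  moreover have "continuous_on {-T..0} (\<lambda>t. a (-T) + integral {-T..t} a')"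
    by (intro continuous_on_add continuous_on_const indefinite_integral_continuous_1
        set_borel_integral_eq_integral(1)[OF si])
  ultimately show ?thesis using continuous_on_eq by blast
qed

lemma first_nonpositive_time:
  fixes v :: "real \<Rightarrow> real"
  assumes cont: "continuous_on {st..} v" and v0: "v st > 0" and t: "t \<ge> st" "v t \<le> 0"
  obtains t1 where "st < t1" "v t1 = 0" "\<And>\<tau>. st \<le> \<tau> \<Longrightarrow> \<tau> < t1 \<Longrightarrow> v \<tau> > 0"
proof -
  define S where "S = {\<tau> \<in> {st..}. v \<tau> \<le> 0}"
  have clS: "closed S" unfolding S_def
    by (rule continuous_on_closed_Collect_le[OF cont]) (auto intro: continuous_intros)
  have bdd: "bdd_below S" by (auto simp: S_def bdd_below_def)
  define t1 where "t1 = Inf S"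
  have "t1 \<in> S" unfolding t1_def using closed_contains_Inf[OF _ bdd clS] t by (auto simp: S_def)
  hence t1ge: "t1 \<ge> st" and vt1: "v t1 \<le> 0" by (auto simp: S_def)
  have pos: "v \<tau> > 0" if "st \<le> \<tau>" "\<tau> < t1" for \<tau>
  proof (rule ccontr)
    assume "\<not> v \<tau> > 0"
    hence "t1 \<le> \<tau>" unfolding t1_def using bdd that by (auto simp: S_def intro: cInf_lower)
    thus False using that by simp
  qed
  have t1gt: "t1 > st" using t1ge vt1 v0 by (cases "t1 = st") auto
  have "v t1 \<ge> 0"
  proof (rule ccontr)
    assume neg: "\<not> v t1 \<ge> 0"
    from cont t1ge have "\<forall>e>0. \<exists>d>0. \<forall>x'\<in>{st..}. dist x' t1 < d \<longrightarrow> dist (v x') (v t1) < e"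
      unfolding continuous_on_iff by auto
    then obtain d where d: "d > 0" "\<forall>x'\<in>{st..}. dist x' t1 < d \<longrightarrow> dist (v x') (v t1) < - v t1"
      using neg by (meson neg_0_less_iff_less not_le)
    define x' where "x' = max st (t1 - d/2)"
    have "dist (v x') (v t1) < - v t1" using d t1gt by (auto simp: x'_def dist_real_def)
    moreover have "v x' > 0" using pos[of x'] d t1gt by (auto simp: x'_def)
    ultimately show False by (auto simp: dist_real_def)
  qed
  thus ?thesis using that t1gt vt1 pos by simp
qed

text \<open>This is the common core of positivity and comparison.\<close>

lemma positivity_barrier:
  fixes v :: "real \<Rightarrow> real" and st K :: real
  assumes cont: "continuous_on {st..} v" and v0: "v st > 0" and K: "K \<ge> 0"
    and decrease: "\<And>u t B. st \<le> u \<Longrightarrow> u \<le> t \<Longrightarrow> (\<And>\<tau>. \<tau>\<in>{st..t} \<Longrightarrow> 0 \<le> v \<tau>)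
               \<Longrightarrow> (\<And>\<tau>. \<tau>\<in>{u..t} \<Longrightarrow> v \<tau> \<le> B) \<Longrightarrow> v t - v u \<ge> - K * (t - u) * B"
    and t: "t \<ge> st"
  shows "v t > 0"
proof (rule ccontr)
  assume "\<not> v t > 0"
  then obtain t1 where t1: "st < t1" "v t1 = 0" and pos: "\<And>\<tau>. st \<le> \<tau> \<Longrightarrow> \<tau> < t1 \<Longrightarrow> v \<tau> > 0"
    using first_nonpositive_time[OF cont v0 t] by (metis not_less)
  have nn: "0 \<le> v \<tau>" if "\<tau> \<in> {st..t1}" for \<tau>
    using pos[of \<tau>] t1 that by (cases "\<tau> = t1") auto
  text \<open>On a short interval [u,t1] the maximum p of v would lose at most half its value.\<close>
  define u where "u = max st (t1 - 1/(2*K+2))"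
  have u: "st \<le> u" "u < t1" "t1 - u \<le> 1/(2*K+2)" using t1 K by (auto simp: u_def)
  have "\<exists>p\<in>{u..t1}. \<forall>y\<in>{u..t1}. v y \<le> v p"
    by (rule continuous_attains_sup) (use u in \<open>auto intro: continuous_on_subset[OF cont]\<close>)
  then obtain p where p: "p \<in> {u..t1}" "\<And>y. y\<in>{u..t1} \<Longrightarrow> v y \<le> v p" by blast
  have m: "v p > 0" using p(2)[of u] u pos[of u] by auto
  have h: "v t1 - v p \<ge> - K * (t1 - p) * v p"
    by (rule decrease) (use p u nn in auto)
  have "K * (t1 - p) \<le> K * (1/(2*K+2))" using p u K by (intro mult_left_mono) auto
  also have "\<dots> \<le> 1/2" using K by (simp add: field_simps)
  finally have "K * (t1 - p) * v p \<le> 1/2 * v p" using m by (intro mult_right_mono) auto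
  hence "v t1 \<ge> v p / 2" using h by simp
  thus False using m t1 by simp
qed

lemma integral_lower_bound:
  fixes f :: "real \<Rightarrow> real"
  assumes "f integrable_on {u..t}" "u \<le> t" "\<And>s. s \<in> {u..t} \<Longrightarrow> f s \<ge> C"
  shows "integral {u..t} f \<ge> (t - u) * C"
  using integral_le[OF integrable_const_ivl assms(1), of C] assms by simp

lemma has_integral_derivative_real:
  assumes "\<And>s. (g has_real_derivative g' s) (at s)" "u \<le> t"
  shows "(g' has_integral g t - g u) {u..t}"
  by (rule fundamental_theorem_of_calculus[OF assms(2)])
     (use assms(1) in \<open>auto simp: has_real_derivative_iff_has_vector_derivative[symmetric]
                        intro: has_field_derivative_at_within\<close>)

text \<open>Increments of x + w, where x is an indefinite integral of f and w is differentiable,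
  are bounded below by (t - u) C once f + w' \<ge> C; this is how the barrier hypothesis is
  verified for solutions.\<close>

lemma increment_lower_bound:
  fixes x w :: "real \<Rightarrow> real"
  assumes f_int: "f integrable_on {u..t}" and incr: "x t - x u = integral {u..t} f"
    and w': "\<And>s. (w has_real_derivative w' s) (at s)" and ut: "u \<le> t"
    and bound: "\<And>s. s \<in> {u..t} \<Longrightarrow> f s + w' s \<ge> C"
  shows "(x t + w t) - (x u + w u) \<ge> (t - u) * C"
proof -
  have hi: "(w' has_integral w t - w u) {u..t}" by (rule has_integral_derivative_real[OF w' ut])
  note fw_int = integrable_add[OF f_int has_integral_integrable[OF hi]]
  have "(x t + w t) - (x u + w u) = integral {u..t} (\<lambda>s. f s + w' s)"
    using integral_add[OF f_int has_integral_integrable[OF hi]] integral_unique[OF hi] incr by simp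
  also have "\<dots> \<ge> (t - u) * C" by (rule integral_lower_bound[OF fw_int ut bound])
  finally show ?thesis .
qed

lemma power_has_integral:
  assumes "t \<ge> (0::real)"
  shows "((\<lambda>s. C * s^k) has_integral C * t^(Suc k) / Suc k) {0..t}"
proof -
  have "((\<lambda>s. C * s^(Suc k) / Suc k) has_real_derivative C * (Suc k * s^k) / Suc k) (at s)" for s :: real
    by (intro derivative_eq_intros) auto
  from has_integral_derivative_real[OF this assms] show ?thesis by simp
qed

lemma exp_series_term_tendsto_zero: "(\<lambda>k. D * x^k / fact k) \<longlonglongrightarrow> (0::real)"
proof -
  have "(\<lambda>k. inverse (fact k) * x^k) \<longlonglongrightarrow> (0::real)"
    by (rule summable_LIMSEQ_zero[OF summable_exp])
  hence "(\<lambda>k. D * (inverse (fact k) * x^k)) \<longlonglongrightarrow> D * 0" by (intro tendsto_mult tendsto_const)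
  thus ?thesis by (simp add: field_simps)
qed

lemma continuous_on_glue_nat:
  fixes Y :: "real \<Rightarrow> real"
  assumes agree: "\<And>n t. t \<in> {0..real n} \<Longrightarrow> Y t = P n t"
    and cont: "\<And>n. continuous_on {0..real n} (P n)"
  shows "continuous_on {0..} Y"
  unfolding continuous_on_eq_continuous_within
proof
  fix t :: real assume t: "t \<in> {0..}"
  define n where "n = nat \<lceil>t\<rceil> + 1"
  have tn: "t < real n" unfolding n_def by linarith
  have "continuous_on {0..real n} Y"
    using continuous_on_cong[of "{0..real n}" "{0..real n}" Y "P n"] agree cont by auto
  hence "continuous (at t within {0..real n}) Y" using t tn by (auto simp: continuous_on_eq_continuous_within)
  moreover have "at t within {0..real n} = at t within {0..}"
    by (rule at_within_nhd[of _ "{..<real n}"]) (use tn in auto)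
  ultimately show "continuous (at t within {0..}) Y" by simp
qed

section \<open>Well-posedness of the state equation\<close>

text \<open>Fixed data of the state equation: the delay kernel a (continuous, being in W^{1,2}),
  the production function f0 (Lipschitz, nondecreasing in the delayed argument, constant in
  its first argument below 0) and the initial history \<eta>1 in L^2.\<close>

locale dde =
  fixes T r Cf :: real and a :: "real \<Rightarrow> real" and f0 :: "real \<Rightarrow> real \<Rightarrow> real"
    and \<eta>1 :: "real \<Rightarrow> real"
  assumes T: "T > 0" and r: "r > 0"
    and a_cont: "continuous_on {-T..0} a" and a_nonneg: "\<forall>t\<in>{-T..0}. 0 \<le> a t"
    and f0_lip: "Cf-lipschitz_on ({0..} \<times> UNIV) (\<lambda>(x, y). f0 x y)"
    and f0_mono: "\<forall>x\<ge>0. mono (f0 x)" and f0_ext: "\<forall>x<0. \<forall>y. f0 x y = f0 0 y"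
    and f0_pos: "\<forall>y>0. f0 0 y > 0"
    and eta1: "L2 T \<eta>1"
begin

lemma Cf_nonneg: "Cf \<ge> 0" using f0_lip by (simp add: lipschitz_on_def)

lemma f0_at_max: "f0 x y = f0 (max x 0) y"
  using f0_ext by (cases "x < 0") auto

text \<open>Through the constant extension to negative capital, f0 is Lipschitz on the whole plane
  (for the l^1 distance).\<close>

lemma f0_lipschitz: "\<bar>f0 x1 y1 - f0 x2 y2\<bar> \<le> Cf * (\<bar>x1 - x2\<bar> + \<bar>y1 - y2\<bar>)"
proof -
  have "dist ((\<lambda>(x, y). f0 x y) (max x1 0, y1)) ((\<lambda>(x, y). f0 x y) (max x2 0, y2))
        \<le> Cf * dist (max x1 0, y1) (max x2 0, y2)"
    using f0_lip unfolding lipschitz_on_def by (auto)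
  moreover have "dist (max x1 0, y1) (max x2 0, y2) \<le> \<bar>x1 - x2\<bar> + \<bar>y1 - y2\<bar>"
  proof -
    have "dist (max x1 0, y1) (max x2 0, y2) \<le> \<bar>max x1 0 - max x2 0\<bar> + \<bar>y1 - y2\<bar>"
      unfolding dist_Pair_Pair dist_real_def by (rule order_trans[OF sqrt_sum_squares_le_sum_abs]) simp
    also have "\<dots> \<le> \<bar>x1 - x2\<bar> + \<bar>y1 - y2\<bar>" by (auto simp: max_def abs_if)
    finally show ?thesis .
  qed
  ultimately have "dist (f0 (max x1 0) y1) (f0 (max x2 0) y2) \<le> Cf * (\<bar>x1 - x2\<bar> + \<bar>y1 - y2\<bar>)"
    using Cf_nonneg by simp (meson mult_left_mono order_trans)
  thus ?thesis by (simp add: dist_real_def f0_at_max[of x1] f0_at_max[of x2])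
qed

lemma f0_mono_delay: "y1 \<le> y2 \<Longrightarrow> f0 x y1 \<le> f0 x y2"
  using f0_mono f0_at_max[of x] by (metis max.cobounded2 monoD)

text \<open>Positivity of f0 0 y for y > 0 and the Lipschitz bound give f0 0 0 \<ge> 0.\<close>

lemma f0_origin_nonneg: "f0 0 0 \<ge> 0"
proof -
  have "f0 0 0 \<ge> f0 0 y - Cf * y" if "y > 0" for y
    using f0_lipschitz[of 0 y 0 0] that by (simp add: abs_le_iff)
  hence h: "f0 0 0 > - Cf * y" if "y > 0" for y using f0_pos that by force
  show ?thesis
  proof (rule ccontr)
    assume "\<not> f0 0 0 \<ge> 0"
    define y where "y = - f0 0 0 / (2*(Cf+1))"
    have y: "y > 0" using \<open>\<not> f0 0 0 \<ge> 0\<close> Cf_nonneg by (simp add: y_def field_simps)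
    have "Cf * y \<le> - f0 0 0 / 2" using \<open>\<not> f0 0 0 \<ge> 0\<close> Cf_nonneg
      by (simp add: y_def field_simps)
    thus False using h[OF y] \<open>\<not> f0 0 0 \<ge> 0\<close> by simp
  qed
qed

lemma f0_continuous: "continuous_on UNIV (\<lambda>p. f0 (fst p) (snd p))"
proof (rule lipschitz_on_continuous_on)
  show "(2*Cf)-lipschitz_on UNIV (\<lambda>p. f0 (fst p) (snd p))"
  proof (rule lipschitz_onI)
    fix p q :: "real \<times> real"
    have "dist (f0 (fst p) (snd p)) (f0 (fst q) (snd q)) \<le> Cf * (\<bar>fst p - fst q\<bar> + \<bar>snd p - snd q\<bar>)"
      using f0_lipschitz by (simp add: dist_real_def)
    also have "\<bar>fst p - fst q\<bar> \<le> dist p q"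
      by (metis dist_fst_le dist_real_def)
    hence "Cf * (\<bar>fst p - fst q\<bar> + \<bar>snd p - snd q\<bar>) \<le> Cf * (dist p q + dist p q)"
      using Cf_nonneg dist_snd_le[of p q] by (intro mult_left_mono) (auto simp: dist_real_def)
    finally show "dist (f0 (fst p) (snd p)) (f0 (fst q) (snd q)) \<le> 2 * Cf * dist p q" by simp
  qed (use Cf_nonneg in simp)
qed

lemma f0_measurable[measurable]: "(\<lambda>p. f0 (fst p) (snd p)) \<in> borel_measurable borel"
  using f0_continuous by (rule borel_measurable_continuous_onI)

lemma f0_lower: "f0 xa ya \<ge> f0 xb yb - Cf * (\<bar>xa - xb\<bar> + \<bar>ya - yb\<bar>)"
  using f0_lipschitz[of xa ya xb yb] by (simp add: abs_le_iff)

lemma a_set_integrable: "set_integrable lborel {-T..0} a"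
  unfolding set_integrable_def by (rule borel_integrable_compact[OF compact_Icc a_cont])

lemma a_measurable[measurable]: "(\<lambda>\<xi>. indicator {-T..0} \<xi> * a \<xi>) \<in> borel_measurable borel"
  using borel_measurable_continuous_on_indicator[OF _ a_cont] by simp

lemma a_bounded: "\<exists>A>0. \<forall>t\<in>{-T..0}. \<bar>a t\<bar> \<le> A"
proof -
  have "bounded (a ` {-T..0})" by (rule compact_imp_bounded[OF compact_continuous_image[OF a_cont compact_Icc]])
  then obtain A where "A > 0" "\<forall>x\<in>a ` {-T..0}. norm x \<le> A" by (auto simp: bounded_pos)
  thus ?thesis by auto
qed

definition a_mass where "a_mass = (LINT \<xi>:{-T..0}|lborel. a \<xi>)"

lemma a_mass_nonneg: "a_mass \<ge> 0"
  unfolding a_mass_def set_lebesgue_integral_def using a_nonneg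
  by (intro integral_nonneg_AE AE_I2) (auto simp: indicator_def)

lemma eta1_measurable[measurable]: "(\<lambda>x. indicator {-T..0} x * \<eta>1 x) \<in> borel_measurable borel"
  using eta1 unfolding L2_def set_borel_measurable_def by simp

definition hist where "hist t = indicator {-T..<0} t * \<eta>1 t"

lemma hist_alt: "hist t = indicator {-T..<0} t * (indicator {-T..0} t * \<eta>1 t)"
  by (auto simp: hist_def indicator_def)

lemma hist_measurable[measurable]: "hist \<in> borel_measurable borel"
  unfolding hist_alt[abs_def] by measurable

lemma hist_integrable: "integrable lborel hist"
proof -
  have i: "integrable lborel (\<lambda>t. indicator {-T..0} t *\<^sub>R \<eta>1 t)"
    using L2_set_integrable[OF eta1] unfolding set_integrable_def .
  have "integrable lborel (\<lambda>t. indicator {-T..<0} t *\<^sub>R (indicator {-T..0} t *\<^sub>R \<eta>1 t))"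
    by (rule integrable_mult_indicator[OF _ i]) simp
  thus ?thesis unfolding hist_alt[abs_def] real_scaleR_def .
qed

definition with_history :: "(real \<Rightarrow> real) \<Rightarrow> real \<Rightarrow> real" where
  "with_history \<phi> t = (if t < -T then 0 else if t < 0 then \<eta>1 t else \<phi> t)"

lemma with_history_eq: "with_history \<phi> t = hist t + indicator {0..} t * \<phi> t"
  using T by (auto simp: with_history_def hist_def indicator_def)

lemma with_history_measurable[measurable]: "continuous_on {0..} \<phi> \<Longrightarrow> with_history \<phi> \<in> borel_measurable borel"
proof -
  assume c: "continuous_on {0..} \<phi>"
  have "(\<lambda>t. indicator {0..} t *\<^sub>R \<phi> t) \<in> borel_measurable borel"
    by (rule borel_measurable_continuous_on_indicator[OF _ c]) simp
  hence "(\<lambda>t. indicator {0..} t * \<phi> t) \<in> borel_measurable borel" by simp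
  thus ?thesis unfolding with_history_eq[abs_def] by measurable
qed

lemma with_history_nonneg: "t \<ge> 0 \<Longrightarrow> with_history \<phi> t = \<phi> t" using T by (simp add: with_history_def)

definition a_max where "a_max = (SOME A. A > 0 \<and> (\<forall>t\<in>{-T..0}. \<bar>a t\<bar> \<le> A))"

lemma a_max: "a_max > 0" "t \<in> {-T..0} \<Longrightarrow> \<bar>a t\<bar> \<le> a_max"
  using someI_ex[OF a_bounded] unfolding a_max_def by auto

definition hist_L1 where "hist_L1 = (LINT t|lborel. \<bar>hist t\<bar>)"

definition delay :: "(real \<Rightarrow> real) \<Rightarrow> real \<Rightarrow> real" where
  "delay x s = (LINT \<xi>:{-T..0}|lborel. a \<xi> * x (s + \<xi>))"

lemma hist_shift_integrable: "integrable lborel (\<lambda>\<xi>. \<bar>hist (s + \<xi>)\<bar>)"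
  using lborel_integrable_real_affine[OF hist_integrable, of 1 s] by (intro integrable_abs) simp

lemma hist_shift_integral: "(LINT \<xi>|lborel. \<bar>hist (s + \<xi>)\<bar>) = hist_L1"
  unfolding hist_L1_def using lborel_integral_real_affine[of 1 "\<lambda>t. \<bar>hist t\<bar>" s] by simp

lemma with_history_shift_bound:
  assumes s: "s \<ge> 0" and bnd: "\<And>u. u \<in> {0..s} \<Longrightarrow> \<bar>\<phi> u\<bar> \<le> B" and \<xi>: "\<xi> \<in> {-T..0}"
  shows "\<bar>with_history \<phi> (s + \<xi>)\<bar> \<le> \<bar>hist (s + \<xi>)\<bar> + B"
proof (cases "s + \<xi> < 0")
  case True
  hence "with_history \<phi> (s + \<xi>) = hist (s + \<xi>)" using s \<xi> by (auto simp: with_history_def hist_def)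
  moreover have "B \<ge> 0" using bnd[of 0] s by auto
  ultimately show ?thesis by simp
next
  case False
  hence "with_history \<phi> (s + \<xi>) = \<phi> (s + \<xi>)" by (simp add: with_history_nonneg)
  moreover have "\<bar>\<phi> (s + \<xi>)\<bar> \<le> B" using bnd False \<xi> by auto
  ultimately show ?thesis by simp
qed

lemma continuous_bounded_on:
  fixes \<phi> :: "real \<Rightarrow> real"
  assumes "continuous_on {0..} \<phi>"
  obtains B where "\<And>u. u \<in> {0..N} \<Longrightarrow> \<bar>\<phi> u\<bar> \<le> B"
proof -
  have "continuous_on {0..N} \<phi>" by (rule continuous_on_subset[OF assms]) auto
  hence "bounded (\<phi> ` {0..N})" by (intro compact_imp_bounded compact_continuous_image) auto
  then obtain B where "\<forall>x\<in>\<phi> ` {0..N}. norm x \<le> B" by (auto simp: bounded_iff)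
  thus ?thesis using that by (metis image_eqI real_norm_def)
qed

lemma delay_integrand_bound:
  assumes s: "s \<ge> 0" and bnd: "\<And>u. u \<in> {0..s} \<Longrightarrow> \<bar>\<phi> u\<bar> \<le> B" and \<xi>: "\<xi> \<in> {-T..0}"
  shows "\<bar>a \<xi> * with_history \<phi> (s + \<xi>)\<bar> \<le> a_max * (\<bar>hist (s + \<xi>)\<bar> + B)"
  unfolding abs_mult by (intro mult_mono a_max \<xi> with_history_shift_bound[OF s bnd]) (use a_max in auto)

lemma delay_majorant:
  shows "set_integrable lborel {-T..0} (\<lambda>\<xi>. a_max * (\<bar>hist (s + \<xi>)\<bar> + B))"
    and "(LINT \<xi>:{-T..0}|lborel. a_max * (\<bar>hist (s + \<xi>)\<bar> + B)) \<le> a_max * (hist_L1 + T * B)"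
proof -
  have i1: "set_integrable lborel {-T..0} (\<lambda>\<xi>. \<bar>hist (s + \<xi>)\<bar>)"
    unfolding set_integrable_def by (intro integrable_mult_indicator hist_shift_integrable) simp
  show "set_integrable lborel {-T..0} (\<lambda>\<xi>. a_max * (\<bar>hist (s + \<xi>)\<bar> + B))"
    by (intro set_integrable_mult_right set_integral_add i1 const_set_integrable)
  have "(LINT \<xi>:{-T..0}|lborel. \<bar>hist (s + \<xi>)\<bar>) \<le> (LINT \<xi>|lborel. \<bar>hist (s + \<xi>)\<bar>)"
    unfolding set_lebesgue_integral_def
    by (intro integral_mono integrable_mult_indicator hist_shift_integrable) (auto simp: indicator_def)
  hence "(LINT \<xi>:{-T..0}|lborel. \<bar>hist (s + \<xi>)\<bar>) + T * B \<le> hist_L1 + T * B"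
    using hist_shift_integral by simp
  moreover have "(LINT \<xi>:{-T..0}|lborel. B) = T * B"
    using T by (subst set_integral_const) (auto simp: measure_lborel_Icc)
  ultimately show "(LINT \<xi>:{-T..0}|lborel. a_max * (\<bar>hist (s + \<xi>)\<bar> + B)) \<le> a_max * (hist_L1 + T * B)"
    using a_max by (simp add: set_integral_mult_right set_integral_add(2)[OF i1 const_set_integrable])
qed

lemma delay_integrable:
  assumes cont: "continuous_on {0..} \<phi>" and s: "s \<ge> 0" and bnd: "\<And>u. u \<in> {0..s} \<Longrightarrow> \<bar>\<phi> u\<bar> \<le> B"
  shows "set_integrable lborel {-T..0} (\<lambda>\<xi>. a \<xi> * with_history \<phi> (s + \<xi>))"
proof (rule set_integrable_bound[OF delay_majorant(1)])
  have "(\<lambda>\<xi>. (indicator {-T..0} \<xi> * a \<xi>) * with_history \<phi> (s + \<xi>)) \<in> borel_measurable borel"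
    using cont by measurable
  thus "set_borel_measurable lborel {-T..0} (\<lambda>\<xi>. a \<xi> * with_history \<phi> (s + \<xi>))"
    unfolding set_borel_measurable_def by (simp add: mult.assoc)
  show "AE \<xi>\<in>{-T..0} in lborel. norm (a \<xi> * with_history \<phi> (s + \<xi>)) \<le> norm (a_max * (\<bar>hist (s + \<xi>)\<bar> + B))"
    using delay_integrand_bound[OF s bnd] by (intro AE_I2 impI) (auto intro: order_trans[OF _ abs_ge_self])
qed

lemma delay_bound:
  assumes cont: "continuous_on {0..} \<phi>" and s: "s \<ge> 0" and bnd: "\<And>u. u \<in> {0..s} \<Longrightarrow> \<bar>\<phi> u\<bar> \<le> B"
  shows "\<bar>delay (with_history \<phi>) s\<bar> \<le> a_max * (hist_L1 + T * B)"
proof -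
  note int = delay_integrable[OF cont s bnd]
  have "\<bar>delay (with_history \<phi>) s\<bar> \<le> (LINT \<xi>:{-T..0}|lborel. \<bar>a \<xi> * with_history \<phi> (s + \<xi>)\<bar>)"
    unfolding delay_def using set_integral_norm_bound[OF int] by simp
  also have "\<dots> \<le> (LINT \<xi>:{-T..0}|lborel. a_max * (\<bar>hist (s + \<xi>)\<bar> + B))"
    using delay_integrand_bound[OF s bnd] set_integrable_abs[OF int]
    by (intro set_integral_mono delay_majorant(1)) auto
  also have "\<dots> \<le> a_max * (hist_L1 + T * B)" by (rule delay_majorant(2))
  finally show ?thesis .
qed

lemma delay_measurable[measurable]:
  assumes cont: "continuous_on {0..} \<phi>"
  shows "(\<lambda>s. delay (with_history \<phi>) s) \<in> borel_measurable borel"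
proof -
  have m: "(\<lambda>p. (indicator {-T..0} (snd p) * a (snd p)) * with_history \<phi> (fst p + snd p))
          \<in> borel_measurable (lborel \<Otimes>\<^sub>M lborel)"
    using cont by measurable
  have "(\<lambda>s. \<integral>\<xi>. (indicator {-T..0} \<xi> * a \<xi>) * with_history \<phi> (s + \<xi>) \<partial>lborel) \<in> borel_measurable lborel"
    using m by (intro lborel.borel_measurable_lebesgue_integral) (simp add: case_prod_beta')
  moreover have "delay (with_history \<phi>) s = (\<integral>\<xi>. (indicator {-T..0} \<xi> * a \<xi>) * with_history \<phi> (s + \<xi>) \<partial>lborel)" for s
    unfolding delay_def set_lebesgue_integral_def by (simp add: mult.assoc)
  ultimately show ?thesis by simp
qed

text \<open>The delay term is monotone in the state since the kernel is nonnegative; this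
  one-sided estimate serves both the Lipschitz bound and the comparison principle.\<close>

lemma delay_diff_le:
  assumes c1: "continuous_on {0..} \<phi>" and c2: "continuous_on {0..} \<psi>" and s: "s \<ge> 0"
    and B: "B \<ge> 0" and d: "\<And>u. u \<in> {0..s} \<Longrightarrow> \<phi> u - \<psi> u \<le> B"
  shows "delay (with_history \<phi>) s - delay (with_history \<psi>) s \<le> a_mass * B"
proof -
  obtain B1 where B1: "\<And>u. u \<in> {0..s} \<Longrightarrow> \<bar>\<phi> u\<bar> \<le> B1" using continuous_bounded_on[OF c1] by blast
  obtain B2 where B2: "\<And>u. u \<in> {0..s} \<Longrightarrow> \<bar>\<psi> u\<bar> \<le> B2" using continuous_bounded_on[OF c2] by blast
  note i1 = delay_integrable[OF c1 s B1] and i2 = delay_integrable[OF c2 s B2]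
  have "delay (with_history \<phi>) s - delay (with_history \<psi>) s = (LINT \<xi>:{-T..0}|lborel. a \<xi> * with_history \<phi> (s + \<xi>) - a \<xi> * with_history \<psi> (s + \<xi>))"
    unfolding delay_def by (rule set_integral_diff(2)[OF i1 i2, symmetric])
  also have "\<dots> \<le> (LINT \<xi>:{-T..0}|lborel. a \<xi> * B)"
  proof (rule set_integral_mono[OF set_integral_diff(1)[OF i1 i2]])
    show "set_integrable lborel {-T..0} (\<lambda>\<xi>. a \<xi> * B)" by (intro set_integrable_mult_left a_set_integrable)
    fix \<xi> assume \<xi>: "\<xi> \<in> {-T..0}"
    have "with_history \<phi> (s + \<xi>) - with_history \<psi> (s + \<xi>) \<le> B"
      using d[of "s + \<xi>"] \<xi> B by (cases "s + \<xi> < 0") (auto simp: with_history_def)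
    hence "a \<xi> * (with_history \<phi> (s + \<xi>) - with_history \<psi> (s + \<xi>)) \<le> a \<xi> * B"
      using a_nonneg \<xi> by (intro mult_left_mono) auto
    thus "a \<xi> * with_history \<phi> (s + \<xi>) - a \<xi> * with_history \<psi> (s + \<xi>) \<le> a \<xi> * B" by (simp add: algebra_simps)
  qed
  also have "\<dots> = a_mass * B" unfolding a_mass_def by (rule set_integral_mult_left)
  finally show ?thesis .
qed

definition rhs :: "(real \<Rightarrow> real) \<Rightarrow> (real \<Rightarrow> real) \<Rightarrow> real \<Rightarrow> real" where
  "rhs c x s = r * x s + f0 (x s) (delay x s) - c s"

text \<open>Lipschitz constant of the right-hand side with respect to the sup-norm on [0,s].\<close>

definition Lc where "Lc = r + Cf + Cf * a_mass"

lemma Lc_pos: "Lc > 0"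
proof -
  have "Cf * a_mass \<ge> 0" using Cf_nonneg a_mass_nonneg by simp
  thus ?thesis using r Cf_nonneg by (simp add: Lc_def)
qed

lemma rhs_lipschitz:
  assumes c1: "continuous_on {0..} \<phi>" and c2: "continuous_on {0..} \<psi>" and s: "s \<ge> 0"
    and d: "\<And>u. u \<in> {0..s} \<Longrightarrow> \<bar>\<phi> u - \<psi> u\<bar> \<le> B"
  shows "\<bar>rhs c (with_history \<phi>) s - rhs c (with_history \<psi>) s\<bar> \<le> Lc * B"
proof -
  define x y where "x = with_history \<phi>" and "y = with_history \<psi>"
  have B: "B \<ge> 0" using d[of 0] s by auto
  have "delay x s - delay y s \<le> a_mass * B" "delay y s - delay x s \<le> a_mass * B"
    using d unfolding x_def y_def by (intro delay_diff_le c1 c2 s B; force simp: abs_le_iff)+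
  hence delay_diff: "\<bar>delay x s - delay y s\<bar> \<le> a_mass * B" by linarith
  have state_diff: "\<bar>x s - y s\<bar> \<le> B" using d[of s] s by (simp add: x_def y_def with_history_nonneg)
  have "\<bar>rhs c x s - rhs c y s\<bar> = \<bar>r * (x s - y s) + (f0 (x s) (delay x s) - f0 (y s) (delay y s))\<bar>"
    unfolding rhs_def by (simp add: algebra_simps)
  also have "\<dots> \<le> r * \<bar>x s - y s\<bar> + \<bar>f0 (x s) (delay x s) - f0 (y s) (delay y s)\<bar>"
    using r by (metis abs_mult abs_of_pos abs_triangle_ineq)
  also have "\<dots> \<le> r * B + Cf * (B + a_mass * B)"
    using f0_lipschitz[of "x s" "delay x s" "y s" "delay y s"] state_diff delay_diff r Cf_nonneg
    by (smt (verit, ccfv_SIG) mult_left_mono)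
  also have "\<dots> = Lc * B" by (simp add: Lc_def algebra_simps)
  finally show ?thesis unfolding x_def y_def .
qed

text \<open>For a continuous candidate and a locally integrable control the right-hand side is
  integrable on every [0,N]: its non-control part is bounded there.\<close>

lemma rhs_set_integrable:
  assumes c1: "continuous_on {0..} \<phi>" and N: "N \<ge> 0" and ci: "set_integrable lborel {0..N} c"
  shows "set_integrable lborel {0..N} (rhs c (with_history \<phi>))"
proof -
  define x where "x = with_history \<phi>"
  obtain B where B: "\<And>u. u \<in> {0..N} \<Longrightarrow> \<bar>\<phi> u\<bar> \<le> B" using continuous_bounded_on[OF c1] by blast
  define h where "h s = r * x s + f0 (x s) (delay x s)" for s
  define C where "C = r * B + \<bar>f0 0 0\<bar> + Cf * (B + a_max * (hist_L1 + T * B))"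
  have hm: "h \<in> borel_measurable borel"
  proof -
    have "(\<lambda>s. f0 (fst (x s, delay x s)) (snd (x s, delay x s))) \<in> borel_measurable borel"
      using c1 unfolding x_def by measurable
    thus ?thesis unfolding h_def[abs_def] x_def using c1 by simp measurable
  qed
  have "set_integrable lborel {0..N} h"
  proof (rule set_integrable_bound[OF const_set_integrable[of 0 N C]])
    show "set_borel_measurable lborel {0..N} h" unfolding set_borel_measurable_def using hm by simp
    show "AE s\<in>{0..N} in lborel. norm (h s) \<le> norm C"
    proof (intro AE_I2 impI)
      fix s assume s: "s \<in> {0..N}"
      have xs: "\<bar>x s\<bar> \<le> B" using B s by (simp add: x_def with_history_nonneg)
      have gs: "\<bar>delay x s\<bar> \<le> a_max * (hist_L1 + T * B)"
        unfolding x_def using s B by (intro delay_bound[OF c1]) auto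
      have "\<bar>f0 (x s) (delay x s)\<bar> \<le> \<bar>f0 0 0\<bar> + Cf * (B + a_max * (hist_L1 + T * B))"
        using f0_lipschitz[of "x s" "delay x s" 0 0] xs gs Cf_nonneg
        by (smt (verit, ccfv_SIG) mult_left_mono)
      moreover have "\<bar>r * x s\<bar> \<le> r * B" using xs r by (simp add: abs_mult)
      ultimately have "\<bar>h s\<bar> \<le> C" unfolding h_def C_def by linarith
      thus "norm (h s) \<le> norm C" by simp
    qed
  qed
  hence "set_integrable lborel {0..N} (\<lambda>s. h s - c s)" by (rule set_integral_diff(1)[OF _ ci])
  thus ?thesis unfolding h_def rhs_def[abs_def] x_def .
qed

text \<open>On subintervals the Lebesgue and the Henstock-Kurzweil integral of the right-hand
  side agree; the Picard estimates are carried out with the latter.\<close>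

lemma rhs_integrable:
  assumes c1: "continuous_on {0..} \<phi>" and t: "0 \<le> t" "t \<le> N" and ci: "set_integrable lborel {0..N} c"
  shows "rhs c (with_history \<phi>) integrable_on {0..t}"
    and "(LINT s:{0..t}|lborel. rhs c (with_history \<phi>) s) = integral {0..t} (rhs c (with_history \<phi>))"
    and "set_integrable lborel {0..t} (rhs c (with_history \<phi>))"
proof -
  have "set_integrable lborel {0..N} (rhs c (with_history \<phi>))"
    using t by (intro rhs_set_integrable[OF c1 _ ci]) auto
  thus si: "set_integrable lborel {0..t} (rhs c (with_history \<phi>))"
    by (rule set_integrable_subset) (use t in auto)
  show "rhs c (with_history \<phi>) integrable_on {0..t}" by (rule set_borel_integral_eq_integral(1)[OF si])
  show "(LINT s:{0..t}|lborel. rhs c (with_history \<phi>) s) = integral {0..t} (rhs c (with_history \<phi>))"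
    by (rule set_borel_integral_eq_integral(2)[OF si])
qed

lemma picard_step_estimate:
  assumes c1: "continuous_on {0..} \<phi>" and c2: "continuous_on {0..} \<psi>"
    and t: "0 \<le> t" "t \<le> N" and ci: "set_integrable lborel {0..N} c" and D: "D \<ge> 0"
    and d: "\<And>u. u \<in> {0..t} \<Longrightarrow> \<bar>\<phi> u - \<psi> u\<bar> \<le> D * (Lc * u)^k / fact k"
  shows "\<bar>integral {0..t} (rhs c (with_history \<phi>)) - integral {0..t} (rhs c (with_history \<psi>))\<bar> \<le> D * (Lc * t)^(Suc k) / fact (Suc k)"
proof -
  note i1 = rhs_integrable(1)[OF c1 t ci] and i2 = rhs_integrable(1)[OF c2 t ci]
  define C where "C = Lc * D * Lc^k / fact k"
  have pi: "((\<lambda>s. C * s^k) has_integral C * t^(Suc k) / Suc k) {0..t}" by (rule power_has_integral[OF t(1)])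
  have "\<bar>integral {0..t} (rhs c (with_history \<phi>)) - integral {0..t} (rhs c (with_history \<psi>))\<bar>
      = norm (integral {0..t} (\<lambda>s. rhs c (with_history \<phi>) s - rhs c (with_history \<psi>) s))"
    by (simp add: integral_diff[OF i1 i2])
  also have "\<dots> \<le> integral {0..t} (\<lambda>s. C * s^k)"
  proof (rule integral_norm_bound_integral)
    show "(\<lambda>s. rhs c (with_history \<phi>) s - rhs c (with_history \<psi>) s) integrable_on {0..t}" by (rule integrable_diff[OF i1 i2])
    show "(\<lambda>s. C * s^k) integrable_on {0..t}" using pi by blast
    fix s assume s: "s \<in> {0..t}"
    have "\<bar>rhs c (with_history \<phi>) s - rhs c (with_history \<psi>) s\<bar> \<le> Lc * (D * (Lc * s)^k / fact k)"
    proof (rule rhs_lipschitz[OF c1 c2])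
      show "0 \<le> s" using s by simp
      fix u assume u: "u \<in> {0..s}"
      have "\<bar>\<phi> u - \<psi> u\<bar> \<le> D * (Lc * u)^k / fact k" using d u s by auto
      also have "\<dots> \<le> D * (Lc * s)^k / fact k"
        using u Lc_pos D by (intro divide_right_mono mult_left_mono power_mono) auto
      finally show "\<bar>\<phi> u - \<psi> u\<bar> \<le> D * (Lc * s)^k / fact k" .
    qed
    also have "\<dots> = C * s^k" by (simp add: C_def power_mult_distrib)
    finally show "norm (rhs c (with_history \<phi>) s - rhs c (with_history \<psi>) s) \<le> C * s^k" by simp
  qed
  also have "\<dots> = C * t^(Suc k) / Suc k" using pi by (rule integral_unique)
  also have "\<dots> = D * (Lc * t)^(Suc k) / fact (Suc k)"
    by (simp add: C_def power_mult_distrib field_simps)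
  finally show ?thesis .
qed


text \<open>Uniqueness on [0,N]: iterating the estimate, the difference of two solutions is
  dominated by a term of the exponential series, hence vanishes.\<close>

lemma unique_on_interval:
  assumes c1: "continuous_on {0..} \<phi>" and c2: "continuous_on {0..} \<psi>"
    and N: "N \<ge> 0" and ci: "set_integrable lborel {0..N} c"
    and e1: "\<And>t. t \<in> {0..N} \<Longrightarrow> \<phi> t = \<eta>0 + integral {0..t} (rhs c (with_history \<phi>))"
    and e2: "\<And>t. t \<in> {0..N} \<Longrightarrow> \<psi> t = \<eta>0 + integral {0..t} (rhs c (with_history \<psi>))"
    and t: "t \<in> {0..N}"
  shows "\<phi> t = \<psi> t"
proof -
  have c3: "continuous_on {0..} (\<lambda>u. \<phi> u - \<psi> u)" by (intro continuous_intros c1 c2)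
  obtain M where M: "\<And>u. u \<in> {0..N} \<Longrightarrow> \<bar>\<phi> u - \<psi> u\<bar> \<le> M" using continuous_bounded_on[OF c3] by blast
  have M0: "M \<ge> 0" using M[of 0] N by auto
  have ind: "\<forall>u\<in>{0..N}. \<bar>\<phi> u - \<psi> u\<bar> \<le> M * (Lc * u)^k / fact k" for k
  proof (induction k)
    case 0 thus ?case using M by simp
  next
    case (Suc k)
    show ?case
    proof
      fix u assume u: "u \<in> {0..N}"
      have "\<bar>\<phi> u - \<psi> u\<bar> = \<bar>integral {0..u} (rhs c (with_history \<phi>)) - integral {0..u} (rhs c (with_history \<psi>))\<bar>"
        using e1[OF u] e2[OF u] by simp
      also have "\<dots> \<le> M * (Lc * u)^(Suc k) / fact (Suc k)"
        by (rule picard_step_estimate[OF c1 c2 _ _ ci M0]) (use u Suc in auto)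
      finally show "\<bar>\<phi> u - \<psi> u\<bar> \<le> M * (Lc * u)^(Suc k) / fact (Suc k)" .
    qed
  qed
  have "\<bar>\<phi> t - \<psi> t\<bar> \<le> 0"
    by (rule LIMSEQ_le_const[OF exp_series_term_tendsto_zero[of M "Lc * t"]]) (use ind t in auto)
  thus ?thesis by simp
qed


text \<open>The Picard operator on bounded continuous functions, frozen after time N.\<close>

definition clamp :: "real \<Rightarrow> real \<Rightarrow> real" where "clamp N t = max 0 (min N t)"

lemma clamp_id: "t \<in> {0..N} \<Longrightarrow> clamp N t = t" by (auto simp: clamp_def)
lemma clamp_in: "N \<ge> 0 \<Longrightarrow> clamp N t \<in> {0..N}" by (auto simp: clamp_def)

definition picard_fun :: "real \<Rightarrow> real \<Rightarrow> (real \<Rightarrow> real) \<Rightarrow> (real \<Rightarrow>\<^sub>C real) \<Rightarrow> real \<Rightarrow> real" where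
  "picard_fun \<eta>0 N c \<phi> = (\<lambda>t. \<eta>0 + integral {0..clamp N t} (rhs c (with_history (apply_bcontfun \<phi>))))"

definition picard where "picard \<eta>0 N c \<phi> = Bcontfun (picard_fun \<eta>0 N c \<phi>)"

lemma picard_fun_bcontfun:
  assumes N: "N \<ge> 0" and ci: "set_integrable lborel {0..N} c"
  shows "picard_fun \<eta>0 N c \<phi> \<in> bcontfun"
proof -
  define I where "I t = integral {0..t} (rhs c (with_history (apply_bcontfun \<phi>)))" for t
  have cI: "continuous_on {0..N} I"
    unfolding I_def by (rule indefinite_integral_continuous_1[OF rhs_integrable(1)[OF _ N order_refl ci]]) simp
  have ccl: "continuous_on UNIV (clamp N)" unfolding clamp_def[abs_def] by (intro continuous_intros)
  have c: "continuous_on UNIV (\<lambda>t. I (clamp N t))"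
    by (rule continuous_on_compose2[OF cI ccl]) (use clamp_in[OF N] in auto)
  have "bounded (I ` {0..N})" by (intro compact_imp_bounded compact_continuous_image cI) auto
  then obtain M where M: "\<forall>x\<in>I ` {0..N}. norm x \<le> M" by (auto simp: bounded_iff)
  show ?thesis
  proof (rule bcontfun_normI)
    show "continuous_on UNIV (picard_fun \<eta>0 N c \<phi>)" unfolding picard_fun_def I_def[symmetric]
      by (intro continuous_intros c)
    fix t
    have "norm (I (clamp N t)) \<le> M" using M clamp_in[OF N] by auto
    thus "norm (picard_fun \<eta>0 N c \<phi> t) \<le> \<bar>\<eta>0\<bar> + M" unfolding picard_fun_def I_def[symmetric]
      by (simp add: abs_triangle_ineq order_trans[OF abs_triangle_ineq])
  qed
qed

lemma picard_apply:
  assumes N: "N \<ge> 0" and ci: "set_integrable lborel {0..N} c"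
  shows "apply_bcontfun (picard \<eta>0 N c \<phi>) t = \<eta>0 + integral {0..clamp N t} (rhs c (with_history (apply_bcontfun \<phi>)))"
  unfolding picard_def using Bcontfun_inverse[OF picard_fun_bcontfun[OF N ci]] by (simp add: picard_fun_def)

text \<open>The k-th iterates of two functions differ on [0,N] by at most (Lc t)^k / k! times their
  distance; hence some iterate of the Picard operator is a contraction.\<close>

lemma picard_iterate_estimate:
  assumes N: "N \<ge> 0" and ci: "set_integrable lborel {0..N} c"
  shows "\<forall>t\<in>{0..N}. \<bar>((picard \<eta>0 N c)^^k) \<phi> t - ((picard \<eta>0 N c)^^k) \<psi> t\<bar> \<le> dist \<phi> \<psi> * (Lc * t)^k / fact k"
proof (induction k)
  case 0
  show ?case using dist_bounded[of \<phi> _ \<psi>] by (simp add: dist_real_def)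
next
  case (Suc k)
  show ?case
  proof
    fix t assume t: "t \<in> {0..N}"
    have "\<bar>((picard \<eta>0 N c)^^Suc k) \<phi> t - ((picard \<eta>0 N c)^^Suc k) \<psi> t\<bar>
       = \<bar>integral {0..t} (rhs c (with_history (((picard \<eta>0 N c)^^k) \<phi>))) - integral {0..t} (rhs c (with_history (((picard \<eta>0 N c)^^k) \<psi>)))\<bar>"
      using t by (simp add: picard_apply[OF N ci] clamp_id)
    also have "\<dots> \<le> dist \<phi> \<psi> * (Lc * t)^(Suc k) / fact (Suc k)"
      by (rule picard_step_estimate[OF _ _ _ _ ci]) (use t Suc in auto)
    finally show "\<bar>((picard \<eta>0 N c)^^Suc k) \<phi> t - ((picard \<eta>0 N c)^^Suc k) \<psi> t\<bar> \<le> dist \<phi> \<psi> * (Lc * t)^(Suc k) / fact (Suc k)" .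
  qed
qed

lemma picard_iterate_contraction:
  assumes N: "N \<ge> 0" and ci: "set_integrable lborel {0..N} c" and k: "k \<ge> 1"
  shows "dist (((picard \<eta>0 N c)^^k) \<phi>) (((picard \<eta>0 N c)^^k) \<psi>) \<le> dist \<phi> \<psi> * (Lc * N)^k / fact k"
proof (rule dist_bound)
  fix t
  obtain j where j: "k = Suc j" using k by (cases k) auto
  have cl: "clamp N (clamp N t) = clamp N t" using clamp_id[OF clamp_in[OF N]] .
  have e: "((picard \<eta>0 N c)^^k) g t = ((picard \<eta>0 N c)^^k) g (clamp N t)" for g
    unfolding j by (simp add: picard_apply[OF N ci] cl)
  have "dist (((picard \<eta>0 N c)^^k) \<phi> t) (((picard \<eta>0 N c)^^k) \<psi> t)
      = \<bar>((picard \<eta>0 N c)^^k) \<phi> (clamp N t) - ((picard \<eta>0 N c)^^k) \<psi> (clamp N t)\<bar>"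
    by (simp add: e[of \<phi>] e[of \<psi>] dist_real_def)
  also have "\<dots> \<le> dist \<phi> \<psi> * (Lc * clamp N t)^k / fact k"
    using picard_iterate_estimate[OF N ci] clamp_in[OF N] by blast
  also have "\<dots> \<le> dist \<phi> \<psi> * (Lc * N)^k / fact k"
    using clamp_in[OF N, of t] Lc_pos
    by (intro divide_right_mono mult_left_mono power_mono) auto
  finally show "dist (((picard \<eta>0 N c)^^k) \<phi> t) (((picard \<eta>0 N c)^^k) \<psi> t) \<le> dist \<phi> \<psi> * (Lc * N)^k / fact k" .
qed

text \<open>Existence on [0,N], from Banach's fixed point theorem applied to a contracting
  iterate of the Picard operator.\<close>

lemma exists_on_interval:
  assumes N: "N \<ge> 0" and ci: "set_integrable lborel {0..N} c"
  shows "\<exists>p::real \<Rightarrow>\<^sub>C real. \<forall>t\<in>{0..N}. p t = \<eta>0 + integral {0..t} (rhs c (with_history p))"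
proof -
  let ?P = "picard \<eta>0 N c"
  have "\<forall>\<^sub>F k in sequentially. 1 * (Lc * N)^k / fact k < (1/2::real)"
    using exp_series_term_tendsto_zero[of 1 "Lc * N"] by (rule order_tendstoD) simp
  then obtain n0 where n0: "\<And>k. k \<ge> n0 \<Longrightarrow> (Lc * N)^k / fact k < 1/2"
    unfolding eventually_sequentially by auto
  define k where "k = max 1 n0"
  have k: "k \<ge> 1" "(Lc * N)^k / fact k < 1/2" using n0[of k] by (auto simp: k_def)
  have "\<exists>!p. (?P^^k) p = p"
  proof (rule banach_fix_type[of "1/2"])
    show "\<forall>x y. dist ((?P^^k) x) ((?P^^k) y) \<le> 1/2 * dist x y"
    proof (intro allI)
      fix x y
      have "dist ((?P^^k) x) ((?P^^k) y) \<le> dist x y * ((Lc * N)^k / fact k)"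
        using picard_iterate_contraction[OF N ci k(1), where \<phi>=x and \<psi>=y] by simp
      also have "\<dots> \<le> dist x y * (1/2)" using k(2) by (intro mult_left_mono) auto
      finally show "dist ((?P^^k) x) ((?P^^k) y) \<le> 1/2 * dist x y" by simp
    qed
  qed auto
  then obtain p where p: "(?P^^k) p = p" and u: "\<And>q. (?P^^k) q = q \<Longrightarrow> q = p" by blast
  have "(?P^^k) (?P p) = ?P p" using p by (metis funpow_swap1)
  hence Pp: "?P p = p" by (rule u)
  show ?thesis
  proof (intro exI ballI)
    fix t assume t: "t \<in> {0..N}"
    have "p t = ?P p t" by (simp add: Pp)
    also have "\<dots> = \<eta>0 + integral {0..t} (rhs c (with_history p))" by (simp add: picard_apply[OF N ci] clamp_id[OF t])
    finally show "p t = \<eta>0 + integral {0..t} (rhs c (with_history p))" .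
  qed
qed

lemma state_eq_iff:
  "state_eq T r a f0 (\<eta>0, \<eta>1) c x \<longleftrightarrow>
     (\<forall>t < - T. x t = 0) \<and> (\<forall>t\<in>{-T..<0}. x t = \<eta>1 t) \<and> continuous_on {0..} x \<and>
     (\<forall>t\<ge>0. set_integrable lborel {0..t} (rhs c x) \<and> x t = \<eta>0 + (LINT s:{0..t}|lborel. rhs c x s))"
  unfolding state_eq_def rhs_def[abs_def] delay_def by simp

lemma solution_with_history: "state_eq T r a f0 (\<eta>0, \<eta>1) c x \<Longrightarrow> with_history x = x"
  unfolding state_eq_iff by (auto simp: with_history_def fun_eq_iff)

lemma rhs_causal:
  assumes "\<And>u. u \<le> s \<Longrightarrow> x u = y u"
  shows "rhs c x s = rhs c y s"
proof -
  have "delay x s = delay y s" unfolding delay_def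
    by (rule set_lebesgue_integral_cong) (use assms in auto)
  thus ?thesis unfolding rhs_def using assms[of s] by simp
qed

lemma solution_integral_eq:
  assumes sol: "state_eq T r a f0 (\<eta>0, \<eta>1) c x" and ci: "set_integrable lborel {0..N} c"
    and t: "t \<in> {0..N}"
  shows "x t = \<eta>0 + integral {0..t} (rhs c (with_history x))"
proof -
  have c: "continuous_on {0..} x" using sol unfolding state_eq_iff by simp
  have "x t = \<eta>0 + (LINT s:{0..t}|lborel. rhs c x s)" using sol t unfolding state_eq_iff by simp
  also have "\<dots> = \<eta>0 + integral {0..t} (rhs c (with_history x))"
    using rhs_integrable(2)[OF c _ _ ci, of t] t solution_with_history[OF sol] by simp
  finally show ?thesis .
qed

lemma solution_unique:
  assumes s1: "state_eq T r a f0 (\<eta>0, \<eta>1) c x" and s2: "state_eq T r a f0 (\<eta>0, \<eta>1) c y"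
    and ci: "\<And>t. t \<ge> 0 \<Longrightarrow> set_integrable lborel {0..t} c"
  shows "x = y"
proof
  fix t
  show "x t = y t"
  proof (cases "t \<ge> 0")
    case True
    have c1: "continuous_on {0..} x" and c2: "continuous_on {0..} y"
      using s1 s2 unfolding state_eq_iff by auto
    have "x t = y t"
      by (rule unique_on_interval[OF c1 c2 True ci[OF True] solution_integral_eq[OF s1 ci[OF True]] solution_integral_eq[OF s2 ci[OF True]]])
         (use True in auto)
    thus ?thesis .
  next
    case False
    thus ?thesis using s1 s2 unfolding state_eq_iff by (cases "t < -T") auto
  qed
qed

lemma solution_of_local_solutions:
  fixes P :: "nat \<Rightarrow> real \<Rightarrow> real"
  assumes ci: "\<And>t. t \<ge> 0 \<Longrightarrow> set_integrable lborel {0..t} c"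
    and cP: "\<And>n. continuous_on {0..} (P n)"
    and P: "\<And>n t. t \<in> {0..real n} \<Longrightarrow> P n t = \<eta>0 + integral {0..t} (rhs c (with_history (P n)))"
    and YP: "\<And>n t. t \<in> {0..real n} \<Longrightarrow> Y t = P n t"
  shows "state_eq T r a f0 (\<eta>0, \<eta>1) c (with_history Y)"
  unfolding state_eq_iff
proof (intro conjI allI impI ballI)
  define X where "X = with_history Y"
  have XP: "X u = with_history (P n) u" if "u \<le> real n" for u n
    using that YP[of u n] by (auto simp: X_def with_history_def)
  have "continuous_on {0..} Y"
    by (rule continuous_on_glue_nat[OF YP]) (auto intro: continuous_on_subset[OF cP])
  thus "continuous_on {0..} (with_history Y)"
    using continuous_on_cong[of "{0..}" "{0..}" X Y] by (auto simp: X_def with_history_nonneg)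
  fix t :: real
  show "t < -T \<Longrightarrow> with_history Y t = 0" by (simp add: with_history_def)
  show "t \<in> {-T..<0} \<Longrightarrow> with_history Y t = \<eta>1 t" by (auto simp: with_history_def)
  assume t: "t \<ge> 0"
  define n where "n = nat \<lceil>t\<rceil>"
  have tn: "t \<le> real n" unfolding n_def by linarith
  have FX: "rhs c X s = rhs c (with_history (P n)) s" if "s \<le> real n" for s
    by (rule rhs_causal) (use XP that in auto)
  have si: "set_integrable lborel {0..t} (rhs c (with_history (P n)))"
    by (rule rhs_integrable(3)[OF cP t tn ci]) (use tn in auto)
  show "set_integrable lborel {0..t} (rhs c (with_history Y))"
    using si set_integrable_cong[of lborel lborel "{0..t}" "{0..t}" "rhs c X" "rhs c (with_history (P n))"] FX tn
    by (auto simp: X_def)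
  have "X t = P n t" using XP[OF tn] t by (simp add: with_history_nonneg)
  also have "\<dots> = \<eta>0 + integral {0..t} (rhs c (with_history (P n)))" using P[of t n] t tn by auto
  also have "integral {0..t} (rhs c (with_history (P n))) = (LINT s:{0..t}|lborel. rhs c (with_history (P n)) s)"
    by (rule rhs_integrable(2)[OF cP t tn ci, symmetric]) (use tn in auto)
  also have "\<dots> = (LINT s:{0..t}|lborel. rhs c X s)"
    by (rule set_lebesgue_integral_cong) (use FX tn in auto)
  finally show "with_history Y t = \<eta>0 + (LINT s:{0..t}|lborel. rhs c (with_history Y) s)"
    by (simp add: X_def)
qed

lemma solution_exists:
  assumes ci: "\<And>t. t \<ge> 0 \<Longrightarrow> set_integrable lborel {0..t} c"
  shows "\<exists>x. state_eq T r a f0 (\<eta>0, \<eta>1) c x"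
proof -
  have "\<forall>n::nat. \<exists>p::real \<Rightarrow>\<^sub>C real. \<forall>t\<in>{0..real n}. p t = \<eta>0 + integral {0..t} (rhs c (with_history p))"
    using exists_on_interval ci by auto
  then obtain P :: "nat \<Rightarrow> (real \<Rightarrow>\<^sub>C real)"
    where P: "\<And>n t. t \<in> {0..real n} \<Longrightarrow> P n t = \<eta>0 + integral {0..t} (rhs c (with_history (P n)))"
    by metis
  have agree: "P m t = P n t" if "t \<in> {0..real m}" "real m \<le> real n" for m n t
  proof (rule unique_on_interval[OF _ _ _ ci _ _ that(1)])
    show "\<And>t. t \<in> {0..real m} \<Longrightarrow> P m t = \<eta>0 + integral {0..t} (rhs c (with_history (P m)))" by (rule P)
    show "\<And>t. t \<in> {0..real m} \<Longrightarrow> P n t = \<eta>0 + integral {0..t} (rhs c (with_history (P n)))"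
      using P that by auto
  qed auto
  define Y where "Y t = P (nat \<lceil>t\<rceil>) t" for t
  have YP: "Y t = P n t" if "t \<in> {0..real n}" for n t
  proof -
    have "t \<le> real (nat \<lceil>t\<rceil>)" using that by linarith
    moreover have "nat \<lceil>t\<rceil> \<le> n" using that by (simp add: ceiling_le_iff nat_le_iff)
    ultimately show ?thesis unfolding Y_def using agree that by auto
  qed
  have "state_eq T r a f0 (\<eta>0, \<eta>1) c (with_history Y)"
    by (rule solution_of_local_solutions[OF ci continuous_on_apply_bcontfun P YP])
  thus ?thesis by blast
qed

text \<open>Hence the definite description in the definition of the state is well defined.\<close>

lemma state_solves:
  assumes ci: "\<And>t. t \<ge> 0 \<Longrightarrow> set_integrable lborel {0..t} c"
  shows "state_eq T r a f0 (\<eta>0, \<eta>1) c (state T r a f0 (\<eta>0, \<eta>1) c)"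
proof -
  obtain x where x: "state_eq T r a f0 (\<eta>0, \<eta>1) c x" using solution_exists[OF ci] by blast
  have "\<exists>!x. state_eq T r a f0 (\<eta>0, \<eta>1) c x"
    using x solution_unique[OF _ _ ci] by blast
  thus ?thesis unfolding state_def by (rule theI')
qed

lemma solution_increment:
  assumes sol: "state_eq T r a f0 (\<eta>0, \<eta>1) c x" and ci: "set_integrable lborel {0..t} c"
    and ut: "0 \<le> u" "u \<le> t"
  shows "rhs c x integrable_on {u..t}" and "x t - x u = integral {u..t} (rhs c x)"
proof -
  have c: "continuous_on {0..} x" using sol unfolding state_eq_iff by simp
  have hist_x: "with_history x = x" by (rule solution_with_history[OF sol])
  have i: "rhs c x integrable_on {0..t}" using rhs_integrable(1)[OF c _ order_refl ci] ut hist_x by simp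
  show "rhs c x integrable_on {u..t}" by (rule integrable_on_subinterval[OF i]) (use ut in auto)
  have "x t = \<eta>0 + integral {0..t} (rhs c x)" using solution_integral_eq[OF sol ci, of t] ut hist_x by simp
  moreover have "x u = \<eta>0 + integral {0..u} (rhs c x)" using solution_integral_eq[OF sol ci, of u] ut hist_x by simp
  moreover have "integral {0..u} (rhs c x) + integral {u..t} (rhs c x) = integral {0..t} (rhs c x)"
    by (rule Henstock_Kurzweil_Integration.integral_combine[OF ut i])
  ultimately show "x t - x u = integral {u..t} (rhs c x)" by simp
qed

lemma solution_at_zero:
  assumes sol: "state_eq T r a f0 (\<eta>0, \<eta>1) c x" and ci: "set_integrable lborel {0..0} c"
  shows "x 0 = \<eta>0"
  using solution_integral_eq[OF sol ci, of 0] by simp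

subsection \<open>Positivity of the state under the zero control\<close>

lemma history_nonneg_shift:
  assumes ae: "AE \<xi> in lborel. \<xi> \<in> {-T..0} \<longrightarrow> 0 \<le> \<eta>1 \<xi>"
  shows "AE \<xi> in lborel. 0 \<le> indicator {-T..0} (s + \<xi>) * \<eta>1 (s + \<xi>)"
proof -
  have "AE \<xi> in lborel. 0 \<le> indicator {-T..0} \<xi> * \<eta>1 \<xi>"
    using ae by eventually_elim (auto simp: indicator_def)
  hence "AE \<xi> in distr lborel borel ((+) s). 0 \<le> indicator {-T..0} \<xi> * \<eta>1 \<xi>"
    by (simp only: lborel_distr_plus)
  thus ?thesis by (subst (asm) AE_distr_iff) auto
qed

lemma delay_nonneg:
  assumes "AE \<xi> in lborel. \<xi> \<in> {-T..0} \<longrightarrow> 0 \<le> x (s + \<xi>)"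
  shows "delay x s \<ge> 0"
proof -
  have "AE \<xi> in lborel. 0 \<le> indicator {-T..0} \<xi> *\<^sub>R (a \<xi> * x (s + \<xi>))"
    using assms by eventually_elim (use a_nonneg in \<open>auto simp: indicator_def\<close>)
  thus ?thesis unfolding delay_def set_lebesgue_integral_def by (rule integral_nonneg_AE)
qed

lemma solution_delay_nonneg:
  assumes sol: "state_eq T r a f0 (\<eta>0, \<eta>1) c x"
    and ae: "AE \<xi> in lborel. \<xi> \<in> {-T..0} \<longrightarrow> 0 \<le> \<eta>1 \<xi>"
    and s: "s \<ge> 0" and nn: "\<And>\<tau>. \<tau> \<in> {0..s} \<Longrightarrow> 0 \<le> x \<tau>"
  shows "delay x s \<ge> 0"
proof (rule delay_nonneg)
  show "AE \<xi> in lborel. \<xi> \<in> {-T..0} \<longrightarrow> 0 \<le> x (s + \<xi>)"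
    using history_nonneg_shift[OF ae, of s]
  proof eventually_elim
    case (elim \<xi>)
    show ?case
    proof
      assume \<xi>: "\<xi> \<in> {-T..0}"
      show "0 \<le> x (s + \<xi>)"
      proof (cases "s + \<xi> < 0")
        case True
        hence "x (s + \<xi>) = \<eta>1 (s + \<xi>)" using sol \<xi> s unfolding state_eq_iff by auto
        thus ?thesis using elim True \<xi> s by (auto simp: indicator_def)
      next
        case False
        hence "s + \<xi> \<in> {0..s}" using \<xi> by auto
        thus ?thesis by (rule nn)
      qed
    qed
  qed
qed

lemma rhs_lower:
  assumes xs: "x s \<ge> 0" and g: "delay x s \<ge> 0" and c: "c s \<le> 0"
  shows "rhs c x s \<ge> (r - Cf) * x s"
proof -
  have "f0 (x s) (delay x s) \<ge> f0 (x s) 0" by (rule f0_mono_delay[OF g])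
  moreover have "f0 (x s) 0 \<ge> f0 0 0 - Cf * x s" using f0_lipschitz[of "x s" 0 0 0] xs by (simp add: abs_le_iff)
  ultimately show ?thesis using f0_origin_nonneg c unfolding rhs_def by (simp add: algebra_simps)
qed


lemma zero_control_integrable: "set_integrable lborel {0..t} (\<lambda>_. 0::real)"
  by (simp add: set_integrable_def)

text \<open>For nonnegative initial history and \<eta>0 > 0 the zero control keeps the state
  positive: the barrier lemma applies with K = Cf.\<close>

lemma zero_control_positive:
  assumes e0: "\<eta>0 > 0" and ae: "AE \<xi> in lborel. \<xi> \<in> {-T..0} \<longrightarrow> 0 \<le> \<eta>1 \<xi>"
    and t: "t \<ge> 0"
  shows "state T r a f0 (\<eta>0, \<eta>1) (\<lambda>_. 0) t > 0"
proof -
  let ?x = "state T r a f0 (\<eta>0, \<eta>1) (\<lambda>_. 0)"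
  note ci = zero_control_integrable
  have sol: "state_eq T r a f0 (\<eta>0, \<eta>1) (\<lambda>_. 0) ?x" by (rule state_solves[OF ci])
  show ?thesis
  proof (rule positivity_barrier[where st=0 and K=Cf and v="?x"])
    show "continuous_on {0..} ?x" using sol unfolding state_eq_iff by simp
    show "?x 0 > 0" using solution_at_zero[OF sol ci] e0 by simp
    fix u t' B assume u: "0 \<le> u" "u \<le> t'" and nn: "\<And>\<tau>. \<tau> \<in> {0..t'} \<Longrightarrow> 0 \<le> ?x \<tau>"
      and bB: "\<And>\<tau>. \<tau> \<in> {u..t'} \<Longrightarrow> ?x \<tau> \<le> B"
    note d = solution_increment[OF sol ci u]
    have "integral {u..t'} (rhs (\<lambda>_. 0) ?x) \<ge> (t' - u) * (- Cf * B)"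
    proof (rule integral_lower_bound[OF d(1) u(2)])
      fix s assume s: "s \<in> {u..t'}"
      have xs: "?x s \<ge> 0" using nn s u by auto
      have g: "delay ?x s \<ge> 0" by (rule solution_delay_nonneg[OF sol ae]) (use s u nn in auto)
      have "rhs (\<lambda>_. 0) ?x s \<ge> (r - Cf) * ?x s" by (rule rhs_lower[OF xs g]) simp
      moreover have "(r - Cf) * ?x s \<ge> - Cf * ?x s" using r xs by (simp add: algebra_simps)
      moreover have "- Cf * ?x s \<ge> - Cf * B" using bB s Cf_nonneg by (simp add: mult_left_mono)
      ultimately show "rhs (\<lambda>_. 0) ?x s \<ge> - Cf * B" by linarith
    qed
    thus "?x t' - ?x u \<ge> - Cf * (t' - u) * B" using d(2) by (simp add: algebra_simps)
  qed (use t Cf_nonneg in auto)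
qed

text \<open>Once the zero-control state is positive on [0,\<infinity>), its delay term is nonnegative
  from time T on, so there it decays at most like exp(-(Cf - r/2) t), compared with
  the barrier \<beta> exp(-(Cf - r/2)(t - T)), \<beta> = x(T)/2.\<close>

lemma zero_control_exponential_barrier:
  assumes pos: "\<And>t. t \<ge> 0 \<Longrightarrow> state T r a f0 (\<eta>0, \<eta>1) (\<lambda>_. 0) t > 0" and t: "t \<ge> T"
  shows "state T r a f0 (\<eta>0, \<eta>1) (\<lambda>_. 0) t >
           state T r a f0 (\<eta>0, \<eta>1) (\<lambda>_. 0) T / 2 * exp (- (Cf - r/2) * (t - T))"
proof -
  let ?x = "state T r a f0 (\<eta>0, \<eta>1) (\<lambda>_. 0)"
  note ci = zero_control_integrable
  have sol: "state_eq T r a f0 (\<eta>0, \<eta>1) (\<lambda>_. 0) ?x" by (rule state_solves[OF ci])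
  have cx: "continuous_on {0..} ?x" using sol unfolding state_eq_iff by simp
  define \<beta> where "\<beta> = ?x T / 2"
  define e where "e t = exp (- (Cf - r/2) * (t - T))" for t
  have \<beta>: "\<beta> > 0" using pos[of T] T by (simp add: \<beta>_def)
  have "?x t - \<beta> * e t > 0"
  proof (rule positivity_barrier[where st=T and K=Cf and v="\<lambda>t. ?x t - \<beta> * e t"])
    show "continuous_on {T..} (\<lambda>t. ?x t - \<beta> * e t)" unfolding e_def using T
      by (auto intro!: continuous_intros intro: continuous_on_subset[OF cx])
    show "?x T - \<beta> * e T > 0" using \<beta> by (simp add: e_def \<beta>_def)
    fix u t' B assume u: "T \<le> u" "u \<le> t'" and nn: "\<And>\<tau>. \<tau> \<in> {T..t'} \<Longrightarrow> 0 \<le> ?x \<tau> - \<beta> * e \<tau>"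
      and bB: "\<And>\<tau>. \<tau> \<in> {u..t'} \<Longrightarrow> ?x \<tau> - \<beta> * e \<tau> \<le> B"
    have u0: "0 \<le> u" using u T by simp
    note d = solution_increment[OF sol ci u0 u(2)]
    have "(?x t' + - (\<beta> * e t')) - (?x u + - (\<beta> * e u)) \<ge> (t' - u) * (- Cf * B)"
    proof (rule increment_lower_bound[OF d, where w="\<lambda>s. - (\<beta> * e s)" and w'="\<lambda>s. \<beta> * (Cf - r/2) * e s"])
      show "((\<lambda>s. - (\<beta> * e s)) has_real_derivative \<beta> * (Cf - r/2) * e s) (at s)" for s
        unfolding e_def by (auto intro!: derivative_eq_intros simp: algebra_simps)
      fix s assume s: "s \<in> {u..t'}"
      have xs: "?x s > 0" using pos s u T by simp
      have "delay ?x s \<ge> 0"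
        by (rule delay_nonneg, rule AE_I2) (use pos s u in \<open>auto intro: less_imp_le\<close>)
      hence F: "rhs (\<lambda>_. 0) ?x s \<ge> (r - Cf) * ?x s" by (intro rhs_lower) (use xs in auto)
      have vs: "?x s - \<beta> * e s \<ge> 0" using nn s u by auto
      have "(r - Cf) * ?x s + \<beta> * (Cf - r/2) * e s = (r - Cf) * (?x s - \<beta> * e s) + (r/2) * (\<beta> * e s)"
        by (simp add: algebra_simps)
      also have "\<dots> \<ge> (r - Cf) * (?x s - \<beta> * e s)" using r \<beta> by (simp add: e_def)
      also have "(r - Cf) * (?x s - \<beta> * e s) \<ge> - Cf * (?x s - \<beta> * e s)" using r vs by (simp add: algebra_simps)
      also have "- Cf * (?x s - \<beta> * e s) \<ge> - Cf * B" using bB[OF s] Cf_nonneg by (simp add: mult_left_mono)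
      finally show "rhs (\<lambda>_. 0) ?x s + \<beta> * (Cf - r/2) * e s \<ge> - Cf * B" using F by linarith
    qed (rule u(2))
    thus "(?x t' - \<beta> * e t') - (?x u - \<beta> * e u) \<ge> - Cf * (t' - u) * B"
      by (simp add: algebra_simps)
  qed (use Cf_nonneg t in auto)
  thus ?thesis by (simp add: \<beta>_def e_def)
qed

lemma zero_control_lower_bound:
  assumes pos: "\<And>t. t \<ge> 0 \<Longrightarrow> state T r a f0 (\<eta>0, \<eta>1) (\<lambda>_. 0) t > 0"
  shows "\<exists>t0 m. m > 0 \<and> (\<forall>t\<in>{0..t0}. state T r a f0 (\<eta>0, \<eta>1) (\<lambda>_. 0) t \<ge> m)
           \<and> (\<forall>t\<ge>t0. state T r a f0 (\<eta>0, \<eta>1) (\<lambda>_. 0) t \<ge> exp (- Cf * t))"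
proof -
  let ?x = "state T r a f0 (\<eta>0, \<eta>1) (\<lambda>_. 0)"
  have cx: "continuous_on {0..} ?x"
    using state_solves[OF zero_control_integrable] unfolding state_eq_iff by simp
  define \<beta> where "\<beta> = ?x T / 2"
  have \<beta>: "\<beta> > 0" using pos[of T] T by (simp add: \<beta>_def)
  define t0 where "t0 = max T (- (ln \<beta> + (Cf - r/2) * T) / (r/2))"
  have late: "?x t \<ge> exp (- Cf * t)" if t: "t \<ge> t0" for t
  proof -
    have "- (ln \<beta> + (Cf - r/2) * T) \<le> (r/2) * t" using t r by (simp add: t0_def field_simps)
    hence "- Cf * t \<le> ln \<beta> + (- (Cf - r/2) * (t - T))" by (simp add: field_simps)
    hence "exp (- Cf * t) \<le> \<beta> * exp (- (Cf - r/2) * (t - T))"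
      using \<beta> by (metis exp_add exp_ln exp_le_cancel_iff)
    thus ?thesis using zero_control_exponential_barrier[OF pos, of t] t by (simp add: \<beta>_def t0_def)
  qed
  have "\<exists>p\<in>{0..t0}. \<forall>y\<in>{0..t0}. ?x p \<le> ?x y"
    by (rule continuous_attains_inf) (use T in \<open>auto simp: t0_def intro: continuous_on_subset[OF cx]\<close>)
  then obtain p where p: "p \<in> {0..t0}" "\<And>y. y \<in> {0..t0} \<Longrightarrow> ?x p \<le> ?x y" by blast
  have "?x p > 0" using pos[of p] p(1) by simp
  thus ?thesis using p late by blast
qed

text \<open>Since f0
  is nondecreasing in the delay term, the delay terms differ by at most a_mass E, and the
  Lipschitz bound gives, for v = x - y + E at time s,
  rhs 0 x s - rhs c y s + Lc E \<ge> -(r + Cf) v, which is what the barrier lemma needs.\<close>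

lemma comparison_rhs_estimate:
  assumes solx: "state_eq T r a f0 (\<eta>0, \<eta>1) (\<lambda>_. 0) x" and soly: "state_eq T r a f0 (\<eta>0, \<eta>1) c y"
    and cs: "c s \<ge> 0" and s: "s \<ge> 0" and E: "E \<ge> 0"
    and yx: "\<And>\<tau>. \<tau> \<in> {0..s} \<Longrightarrow> y \<tau> - x \<tau> \<le> E"
  shows "rhs (\<lambda>_. 0) x s - rhs c y s + Lc * E \<ge> - (r + Cf) * (x s - y s + E)"
proof -
  have cx: "continuous_on {0..} x" using solx unfolding state_eq_iff by simp
  have cy: "continuous_on {0..} y" using soly unfolding state_eq_iff by simp
  have "delay y s - delay x s \<le> a_mass * E"
    using delay_diff_le[OF cy cx s E yx] solution_with_history[OF solx] solution_with_history[OF soly]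
    by simp
  hence "f0 (x s) (delay x s) \<ge> f0 (x s) (delay y s - a_mass * E)" by (intro f0_mono_delay) simp
  moreover have "f0 (x s) (delay y s - a_mass * E) \<ge> f0 (y s) (delay y s) - Cf * (\<bar>x s - y s\<bar> + a_mass * E)"
    using f0_lower[of "y s" "delay y s" "x s" "delay y s - a_mass * E"] a_mass_nonneg E
    by (simp add: abs_minus_commute)
  ultimately have f: "f0 (x s) (delay x s) - f0 (y s) (delay y s) \<ge> - Cf * (\<bar>x s - y s\<bar> + a_mass * E)"
    by linarith
  have "r * (x s - y s) \<ge> - r * \<bar>x s - y s\<bar>"
    using mult_left_mono[of "- \<bar>x s - y s\<bar>" "x s - y s" r] r by simp
  hence "rhs (\<lambda>_. 0) x s - rhs c y s \<ge> - (r + Cf) * \<bar>x s - y s\<bar> - Cf * (a_mass * E)"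
    using f cs unfolding rhs_def by (simp add: algebra_simps)
  moreover have "\<bar>x s - y s\<bar> \<le> (x s - y s + E) + E" using yx[of s] s E by (simp add: abs_le_iff)
  hence "(r + Cf) * \<bar>x s - y s\<bar> \<le> (r + Cf) * ((x s - y s + E) + E)"
    using r Cf_nonneg by (intro mult_left_mono) auto
  ultimately show ?thesis by (simp add: Lc_def algebra_simps)
qed

text \<open>The barrier lemma is applied to x - y + \<epsilon> exp(Lc t), with \<epsilon> chosen so small that
  a violation at time t would contradict positivity.\<close>

lemma state_comparison:
  assumes cpos: "\<And>t. t \<ge> 0 \<Longrightarrow> 0 \<le> c t" and ci: "\<And>t. t \<ge> 0 \<Longrightarrow> set_integrable lborel {0..t} c"
    and t: "t \<ge> 0"
  shows "state T r a f0 (\<eta>0, \<eta>1) c t \<le> state T r a f0 (\<eta>0, \<eta>1) (\<lambda>_. 0) t"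
proof (rule ccontr)
  let ?x = "state T r a f0 (\<eta>0, \<eta>1) (\<lambda>_. 0)" and ?y = "state T r a f0 (\<eta>0, \<eta>1) c"
  assume contra: "\<not> ?y t \<le> ?x t"
  note ci0 = zero_control_integrable
  have solx: "state_eq T r a f0 (\<eta>0, \<eta>1) (\<lambda>_. 0) ?x" by (rule state_solves[OF ci0])
  have soly: "state_eq T r a f0 (\<eta>0, \<eta>1) c ?y" by (rule state_solves[OF ci])
  have cx: "continuous_on {0..} ?x" and cy: "continuous_on {0..} ?y"
    using solx soly unfolding state_eq_iff by simp_all
  define \<epsilon> where "\<epsilon> = (?y t - ?x t) / (2 * exp (Lc * t))"
  have \<epsilon>: "\<epsilon> > 0" using contra by (simp add: \<epsilon>_def)
  have "?x t - ?y t + \<epsilon> * exp (Lc * t) > 0"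
  proof (rule positivity_barrier[where st=0 and K="r + Cf" and v="\<lambda>t. ?x t - ?y t + \<epsilon> * exp (Lc * t)"])
    show "continuous_on {0..} (\<lambda>t. ?x t - ?y t + \<epsilon> * exp (Lc * t))"
      by (intro continuous_intros cx cy)
    show "?x 0 - ?y 0 + \<epsilon> * exp (Lc * 0) > 0"
      using solution_at_zero[OF solx ci0] solution_at_zero[OF soly ci] \<epsilon> by simp
    fix u t' B assume u: "0 \<le> u" "u \<le> t'"
      and nn: "\<And>\<tau>. \<tau> \<in> {0..t'} \<Longrightarrow> 0 \<le> ?x \<tau> - ?y \<tau> + \<epsilon> * exp (Lc * \<tau>)"
      and bB: "\<And>\<tau>. \<tau> \<in> {u..t'} \<Longrightarrow> ?x \<tau> - ?y \<tau> + \<epsilon> * exp (Lc * \<tau>) \<le> B"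
    have t'0: "0 \<le> t'" using u by simp
    note dx = solution_increment[OF solx ci0 u] and dy = solution_increment[OF soly ci[OF t'0] u]
    have "(?x t' - ?y t' + \<epsilon> * exp (Lc * t')) - (?x u - ?y u + \<epsilon> * exp (Lc * u))
        \<ge> (t' - u) * (- (r + Cf) * B)"
    proof (rule increment_lower_bound[where x="\<lambda>s. ?x s - ?y s" and w="\<lambda>s. \<epsilon> * exp (Lc * s)"
          and w'="\<lambda>s. Lc * (\<epsilon> * exp (Lc * s))"])
      show "(\<lambda>s. rhs (\<lambda>_. 0) ?x s - rhs c ?y s) integrable_on {u..t'}"
        by (rule integrable_diff[OF dx(1) dy(1)])
      show "?x t' - ?y t' - (?x u - ?y u) = integral {u..t'} (\<lambda>s. rhs (\<lambda>_. 0) ?x s - rhs c ?y s)"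
        using integral_diff[OF dx(1) dy(1)] dx(2) dy(2) by simp
      show "((\<lambda>s. \<epsilon> * exp (Lc * s)) has_real_derivative Lc * (\<epsilon> * exp (Lc * s))) (at s)" for s
        by (auto intro!: derivative_eq_intros)
      fix s assume s: "s \<in> {u..t'}"
      have "?y \<tau> - ?x \<tau> \<le> \<epsilon> * exp (Lc * s)" if "\<tau> \<in> {0..s}" for \<tau>
      proof -
        have "?y \<tau> - ?x \<tau> \<le> \<epsilon> * exp (Lc * \<tau>)" using nn[of \<tau>] that s by auto
        also have "\<dots> \<le> \<epsilon> * exp (Lc * s)" using \<epsilon> Lc_pos that by (intro mult_left_mono) auto
        finally show ?thesis .
      qed
      hence "rhs (\<lambda>_. 0) ?x s - rhs c ?y s + Lc * (\<epsilon> * exp (Lc * s))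
          \<ge> - (r + Cf) * (?x s - ?y s + \<epsilon> * exp (Lc * s))"
        using s u \<epsilon> by (intro comparison_rhs_estimate[OF solx soly cpos]) auto
      moreover have "(r + Cf) * (?x s - ?y s + \<epsilon> * exp (Lc * s)) \<le> (r + Cf) * B"
        using bB[OF s] r Cf_nonneg by (intro mult_left_mono) auto
      ultimately show "rhs (\<lambda>_. 0) ?x s - rhs c ?y s + Lc * (\<epsilon> * exp (Lc * s)) \<ge> - (r + Cf) * B"
        by linarith
    qed (rule u(2))
    thus "(?x t' - ?y t' + \<epsilon> * exp (Lc * t')) - (?x u - ?y u + \<epsilon> * exp (Lc * u)) \<ge> - (r + Cf) * (t' - u) * B"
      by (simp add: algebra_simps)
  qed (use t r Cf_nonneg in auto)
  moreover have "\<epsilon> * exp (Lc * t) = (?y t - ?x t) / 2" by (simp add: \<epsilon>_def)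
  ultimately show False using contra by (simp add: field_simps)
qed

end

section \<open>Finiteness of the objective under the zero control\<close>

lemma eint_gt_minf_if_neg_part_finite:
  assumes "(\<integral>\<^sup>+t. indicator S t * ennreal (- g t) \<partial>lborel) < \<infinity>"
  shows "eint g S > -\<infinity>"
proof -
  define P Q where "P = (\<integral>\<^sup>+t. indicator S t * ennreal (g t) \<partial>lborel)"
    and "Q = (\<integral>\<^sup>+t. indicator S t * ennreal (- g t) \<partial>lborel)"
  have "enn2ereal Q < \<infinity>" using assms by (simp add: Q_def less_ennreal.rep_eq)
  moreover have "enn2ereal P \<ge> 0" by (simp add: enn2ereal_nonneg)
  ultimately have "enn2ereal P - enn2ereal Q > -\<infinity>"
    by (cases "enn2ereal P"; cases "enn2ereal Q") auto
  thus ?thesis unfolding eint_def P_def Q_def .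
qed

lemma eint_neg_part_finite:
  assumes "eint g S > -\<infinity>" and "(\<integral>\<^sup>+t. indicator S t * ennreal (g t) \<partial>lborel) < \<infinity>"
  shows "(\<integral>\<^sup>+t. indicator S t * ennreal (- g t) \<partial>lborel) < \<infinity>"
proof -
  define P Q where "P = (\<integral>\<^sup>+t. indicator S t * ennreal (g t) \<partial>lborel)"
    and "Q = (\<integral>\<^sup>+t. indicator S t * ennreal (- g t) \<partial>lborel)"
  have "Q < top"
  proof (rule ccontr)
    assume "\<not> Q < top"
    hence "Q = top" using top.not_eq_extremum by blast
    moreover have "enn2ereal P < \<infinity>" using assms(2) unfolding P_def by (simp add: less_ennreal.rep_eq)
    moreover have "enn2ereal P \<ge> 0" by (simp add: enn2ereal_nonneg)
    ultimately have "enn2ereal P - enn2ereal Q = -\<infinity>" by (cases "enn2ereal P") auto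
    thus False using assms(1) unfolding eint_def P_def Q_def by simp
  qed
  thus ?thesis unfolding Q_def by simp
qed

lemma ennreal_add_le: "(b::real) \<ge> 0 \<Longrightarrow> ennreal (x + b) \<le> ennreal x + ennreal b"
proof (cases "x \<ge> 0")
  case False
  assume "b \<ge> 0"
  have "ennreal (x + b) \<le> ennreal b" using False by (intro ennreal_leI) simp
  also have "\<dots> \<le> ennreal x + ennreal b" by simp
  finally show ?thesis .
qed simp

lemma exp_decay_nn_integral_finite:
  assumes \<rho>: "\<rho> > 0" and C: "C \<ge> 0"
  shows "(\<integral>\<^sup>+t. indicator {0..} t * ennreal (C * exp (- \<rho> * t)) \<partial>lborel) < \<infinity>"
proof -
  have hi: "((\<lambda>t. C * exp (- \<rho> * t)) has_integral C * (exp (- \<rho> * 0) / \<rho>)) {0..}"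
    by (intro has_integral_mult_right has_integral_exp_minus_to_infinity \<rho>)
  have "integral\<^sup>N lborel (\<lambda>x. indicator {0..} x * (C * exp (- \<rho> * x))) = C * (exp (- \<rho> * 0) / \<rho>)"
    by (rule nn_integral_has_integral_lebesgue[OF _ hi]) (use C in simp)
  moreover have "integral\<^sup>N lborel (\<lambda>x. indicator {0..} x * (C * exp (- \<rho> * x)))
      = (\<integral>\<^sup>+t. indicator {0..} t * ennreal (C * exp (- \<rho> * t)) \<partial>lborel)"
    by (rule nn_integral_cong) (simp split: split_indicator)
  ultimately show ?thesis by (metis ennreal_less_top infinity_ennreal_def)
qed

lemma eint_lower_bound:
  fixes g h :: "real \<Rightarrow> real"
  assumes hm[measurable]: "h \<in> borel_measurable borel" and \<rho>: "\<rho> > 0" and C: "C \<ge> 0"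
    and hint: "eint h {0..} > -\<infinity>"
    and hpos: "(\<integral>\<^sup>+t. indicator {0..} t * ennreal (h t) \<partial>lborel) < \<infinity>"
    and bound: "\<And>t. t \<ge> 0 \<Longrightarrow> g t \<ge> h t - C * exp (- \<rho> * t)"
  shows "eint g {0..} > -\<infinity>"
proof (rule eint_gt_minf_if_neg_part_finite)
  let ?E = "\<lambda>t. indicator {0..} t * ennreal (C * exp (- \<rho> * t))"
  have "(\<integral>\<^sup>+t. indicator {0..} t * ennreal (- g t) \<partial>lborel)
      \<le> (\<integral>\<^sup>+t. indicator {0..} t * ennreal (- h t) + ?E t \<partial>lborel)"
  proof (rule nn_integral_mono)
    fix t :: real
    show "indicator {0..} t * ennreal (- g t) \<le> indicator {0..} t * ennreal (- h t) + ?E t"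
    proof (cases "t \<ge> 0")
      case True
      have "ennreal (- g t) \<le> ennreal (- h t + C * exp (- \<rho> * t))"
        using bound[OF True] by (intro ennreal_leI) simp
      also have "\<dots> \<le> ennreal (- h t) + ennreal (C * exp (- \<rho> * t))"
        by (rule ennreal_add_le) (use C in simp)
      finally show ?thesis using True by simp
    qed simp
  qed
  also have "\<dots> = (\<integral>\<^sup>+t. indicator {0..} t * ennreal (- h t) \<partial>lborel) + (\<integral>\<^sup>+t. ?E t \<partial>lborel)"
    by (rule nn_integral_add) measurable
  also have "\<dots> < \<infinity>"
    using eint_neg_part_finite[OF hint hpos] exp_decay_nn_integral_finite[OF \<rho> C]
    by (simp add: ennreal_add_less_top)
  finally show "(\<integral>\<^sup>+t. indicator {0..} t * ennreal (- g t) \<partial>lborel) < \<infinity>" .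
qed

text \<open>The comparison integrand exp(-\<rho> t) U2(exp(-Cf t)) of the hypothesis on U2 has a finite
  positive part, since U2 is nondecreasing and exp(-Cf t) \<le> 1.\<close>

lemma U2_comparison_pos_part_finite:
  assumes \<rho>: "\<rho> > 0" and Cf: "Cf \<ge> 0" and U2_mono: "\<And>x y. 0 < x \<Longrightarrow> x \<le> y \<Longrightarrow> U2 x \<le> U2 y"
  shows "(\<integral>\<^sup>+t. indicator {0..} t * ennreal (exp (- \<rho> * t) * U2 (exp (- Cf * t))) \<partial>lborel) < \<infinity>"
proof -
  have "(\<integral>\<^sup>+t. indicator {0..} t * ennreal (exp (- \<rho> * t) * U2 (exp (- Cf * t))) \<partial>lborel)
      \<le> (\<integral>\<^sup>+t. indicator {0..} t * ennreal (max 0 (U2 1) * exp (- \<rho> * t)) \<partial>lborel)"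
  proof (rule nn_integral_mono)
    fix t :: real
    show "indicator {0..} t * ennreal (exp (- \<rho> * t) * U2 (exp (- Cf * t)))
        \<le> indicator {0..} t * ennreal (max 0 (U2 1) * exp (- \<rho> * t))"
    proof (cases "t \<ge> 0")
      case True
      have "U2 (exp (- Cf * t)) \<le> max 0 (U2 1)" using U2_mono[of "exp (- Cf * t)" 1] Cf True by simp
      hence "exp (- \<rho> * t) * U2 (exp (- Cf * t)) \<le> max 0 (U2 1) * exp (- \<rho> * t)"
        by (simp add: mult.commute mult_left_mono)
      thus ?thesis using True by (simp add: ennreal_leI)
    qed simp
  qed
  also have "\<dots> < \<infinity>" by (rule exp_decay_nn_integral_finite[OF \<rho>]) simp
  finally show ?thesis .
qed

context dde
begin

lemma zero_control_utility_bound: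
  assumes pos: "\<And>t. t \<ge> 0 \<Longrightarrow> state T r a f0 (\<eta>0, \<eta>1) (\<lambda>_. 0) t > 0"
    and U2_mono: "\<And>x y. 0 < x \<Longrightarrow> x \<le> y \<Longrightarrow> U2 x \<le> U2 y"
  shows "\<exists>C \<ge> 0. \<forall>t \<ge> 0.
    exp (- \<rho> * t) * (U1 0 + U2 (state T r a f0 (\<eta>0, \<eta>1) (\<lambda>_. 0) t))
      \<ge> exp (- \<rho> * t) * U2 (exp (- Cf * t)) - C * exp (- \<rho> * t)"
proof -
  let ?x = "state T r a f0 (\<eta>0, \<eta>1) (\<lambda>_. 0)"
  obtain t0 m where m: "m > 0" "\<forall>t\<in>{0..t0}. ?x t \<ge> m" "\<forall>t\<ge>t0. ?x t \<ge> exp (- Cf * t)"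
    using zero_control_lower_bound[OF pos] by blast
  define C where "C = \<bar>U2 1 - U2 m\<bar> + \<bar>U1 0\<bar>"
  have "exp (- \<rho> * t) * (U1 0 + U2 (?x t)) \<ge> exp (- \<rho> * t) * U2 (exp (- Cf * t)) - C * exp (- \<rho> * t)"
    if t: "t \<ge> 0" for t
  proof -
    have "U2 (?x t) \<ge> U2 (exp (- Cf * t)) - \<bar>U2 1 - U2 m\<bar>"
    proof (cases "t \<le> t0")
      case True
      have "U2 (?x t) \<ge> U2 m" using U2_mono[OF m(1)] m(2) True t by auto
      moreover have "U2 (exp (- Cf * t)) \<le> U2 1" using U2_mono[of "exp (- Cf * t)" 1] Cf_nonneg t by simp
      ultimately show ?thesis by linarith
    next
      case False
      thus ?thesis using U2_mono[of "exp (- Cf * t)" "?x t"] m(3) by auto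
    qed
    hence "U1 0 + U2 (?x t) \<ge> U2 (exp (- Cf * t)) - C" unfolding C_def by linarith
    hence "exp (- \<rho> * t) * (U1 0 + U2 (?x t)) \<ge> exp (- \<rho> * t) * (U2 (exp (- Cf * t)) - C)"
      by (intro mult_left_mono) auto
    thus ?thesis by (simp add: algebra_simps)
  qed
  moreover have "C \<ge> 0" by (simp add: C_def)
  ultimately show ?thesis by blast
qed

lemma zero_control_objective_finite:
  assumes \<rho>: "\<rho> > 0" and pos: "\<And>t. t \<ge> 0 \<Longrightarrow> state T r a f0 (\<eta>0, \<eta>1) (\<lambda>_. 0) t > 0"
    and U2_cont: "continuous_on {0<..} U2" and U2_mono: "\<And>x y. 0 < x \<Longrightarrow> x \<le> y \<Longrightarrow> U2 x \<le> U2 y"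
    and U2_int: "eint (\<lambda>t. exp (- \<rho> * t) * U2 (exp (- Cf * t))) {0..} > -\<infinity>"
  shows "J T r \<rho> a f0 U1 U2 (\<eta>0, \<eta>1) (\<lambda>_. 0) > -\<infinity>"
proof -
  have "\<exists>C \<ge> 0. \<forall>t \<ge> 0.
      exp (- \<rho> * t) * (U1 0 + U2 (state T r a f0 (\<eta>0, \<eta>1) (\<lambda>_. 0) t))
        \<ge> exp (- \<rho> * t) * U2 (exp (- Cf * t)) - C * exp (- \<rho> * t)"
    by (rule zero_control_utility_bound[OF pos U2_mono])
  then obtain C where C: "C \<ge> 0" and bound: "\<forall>t \<ge> 0.
      exp (- \<rho> * t) * (U1 0 + U2 (state T r a f0 (\<eta>0, \<eta>1) (\<lambda>_. 0) t))
        \<ge> exp (- \<rho> * t) * U2 (exp (- Cf * t)) - C * exp (- \<rho> * t)"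
    by blast
  have "continuous_on UNIV (\<lambda>t. U2 (exp (- Cf * t)))"
    by (rule continuous_on_compose2[OF U2_cont]) (auto intro!: continuous_intros)
  hence "(\<lambda>t. exp (- \<rho> * t) * U2 (exp (- Cf * t))) \<in> borel_measurable borel"
    by (intro borel_measurable_continuous_onI continuous_intros)
  from eint_lower_bound[OF this \<rho> C U2_int U2_comparison_pos_part_finite[OF \<rho> Cf_nonneg U2_mono]]
  show ?thesis unfolding J_def using bound by simp
qed

end

lemma dde_instance:
  assumes "T > 0" and "r > 0" and "W12 T a" and "\<forall>t\<in>{-T..0}. 0 \<le> a t"
    and "Cf-lipschitz_on ({0..} \<times> UNIV) (\<lambda>(x, y). f0 x y)"
    and "\<forall>x\<ge>0. mono (f0 x)" and "\<forall>x<0. \<forall>y. f0 x y = f0 0 y" and "\<forall>y>0. f0 0 y > 0"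
    and "L2 T \<eta>1"
  shows "dde T r Cf a f0 \<eta>1"
  unfolding dde_def using assms W12_continuous[OF assms(3)] by blast

lemma zero_control_ctrl: "ctrl (\<lambda>_. 0)"
  by (simp add: ctrl_def set_integrable_def)

lemma Hpp_subset_zero_admissible:
  assumes family: "\<And>\<eta>1. L2 T \<eta>1 \<Longrightarrow> dde T r Cf a f0 \<eta>1"
  shows "Hpp T \<subseteq> {\<eta> \<in> Hplus T. (\<lambda>_. 0) \<in> admissible T r a f0 \<eta>}"
proof
  fix \<eta> assume \<eta>: "\<eta> \<in> Hpp T"
  obtain \<eta>0 \<eta>1 where e: "\<eta> = (\<eta>0, \<eta>1)" by (cases \<eta>)
  from \<eta> have h: "\<eta>0 > 0" "L2 T \<eta>1" "AE \<xi> in lborel. \<xi> \<in> {-T..0} \<longrightarrow> 0 \<le> \<eta>1 \<xi>"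
    by (auto simp: Hpp_def Hplus_def e)
  have "\<forall>t\<ge>0. state T r a f0 (\<eta>0, \<eta>1) (\<lambda>_. 0) t > 0"
    using dde.zero_control_positive[OF family[OF h(2)] h(1) h(3)] by blast
  thus "\<eta> \<in> {\<eta> \<in> Hplus T. (\<lambda>_. 0) \<in> admissible T r a f0 \<eta>}"
    using \<eta> zero_control_ctrl by (auto simp: admissible_def e Hpp_def)
qed

lemma zero_admissible_subset_DV:
  assumes family: "\<And>\<eta>1. L2 T \<eta>1 \<Longrightarrow> dde T r Cf a f0 \<eta>1" and \<rho>: "\<rho> > 0"
    and U2_cont: "continuous_on {0<..} U2" and U2_mono: "\<And>x y. 0 < x \<Longrightarrow> x \<le> y \<Longrightarrow> U2 x \<le> U2 y"
    and U2_int: "eint (\<lambda>t. exp (- \<rho> * t) * U2 (exp (- Cf * t))) {0..} > -\<infinity>"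
  shows "{\<eta> \<in> Hplus T. (\<lambda>_. 0) \<in> admissible T r a f0 \<eta>} \<subseteq> DV T r \<rho> a f0 U1 U2"
proof
  fix \<eta> assume \<eta>: "\<eta> \<in> {\<eta> \<in> Hplus T. (\<lambda>_. 0) \<in> admissible T r a f0 \<eta>}"
  obtain \<eta>0 \<eta>1 where e: "\<eta> = (\<eta>0, \<eta>1)" by (cases \<eta>)
  from \<eta> have h: "L2 T \<eta>1" and adm: "(\<lambda>_. 0) \<in> admissible T r a f0 (\<eta>0, \<eta>1)"
    by (auto simp: Hplus_def e)
  have "J T r \<rho> a f0 U1 U2 (\<eta>0, \<eta>1) (\<lambda>_. 0) > -\<infinity>"
    by (rule dde.zero_control_objective_finite[OF family[OF h] \<rho> _ U2_cont U2_mono U2_int])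
       (use adm in \<open>auto simp: admissible_def\<close>)
  moreover have "J T r \<rho> a f0 U1 U2 (\<eta>0, \<eta>1) (\<lambda>_. 0) \<le> V T r \<rho> a f0 U1 U2 (\<eta>0, \<eta>1)"
    unfolding V_def by (rule SUP_upper[OF adm])
  ultimately show "\<eta> \<in> DV T r \<rho> a f0 U1 U2" using \<eta> by (auto simp: DV_def e)
qed

text \<open>If V(\<eta>) > -\<infinity>, some control c is admissible, and by comparison so is the zero control.\<close>

lemma DV_subset_zero_admissible:
  assumes family: "\<And>\<eta>1. L2 T \<eta>1 \<Longrightarrow> dde T r Cf a f0 \<eta>1"
  shows "DV T r \<rho> a f0 U1 U2 \<subseteq> {\<eta> \<in> Hplus T. (\<lambda>_. 0) \<in> admissible T r a f0 \<eta>}"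
proof
  fix \<eta> assume \<eta>: "\<eta> \<in> DV T r \<rho> a f0 U1 U2"
  obtain \<eta>0 \<eta>1 where e: "\<eta> = (\<eta>0, \<eta>1)" by (cases \<eta>)
  from \<eta> have h: "L2 T \<eta>1" and Vf: "V T r \<rho> a f0 U1 U2 (\<eta>0, \<eta>1) > -\<infinity>"
    by (auto simp: DV_def Hplus_def e)
  have "admissible T r a f0 (\<eta>0, \<eta>1) \<noteq> {}"
    using Vf unfolding V_def by (auto simp: bot_ereal_def)
  then obtain c where "c \<in> admissible T r a f0 (\<eta>0, \<eta>1)" by blast
  hence cpos: "\<And>t. t \<ge> 0 \<Longrightarrow> 0 \<le> c t" and ci: "\<And>t. t \<ge> 0 \<Longrightarrow> set_integrable lborel {0..t} c"
    and sp: "\<And>t. t \<ge> 0 \<Longrightarrow> state T r a f0 (\<eta>0, \<eta>1) c t > 0"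
    by (auto simp: admissible_def ctrl_def)
  have "state T r a f0 (\<eta>0, \<eta>1) (\<lambda>_. 0) t > 0" if "t \<ge> 0" for t
  proof -
    have "state T r a f0 (\<eta>0, \<eta>1) c t \<le> state T r a f0 (\<eta>0, \<eta>1) (\<lambda>_. 0) t"
      by (rule dde.state_comparison[OF family[OF h]]) (use cpos ci that in auto)
    thus ?thesis using sp[OF that] by linarith
  qed
  thus "\<eta> \<in> {\<eta> \<in> Hplus T. (\<lambda>_. 0) \<in> admissible T r a f0 \<eta>}"
    using \<eta> zero_control_ctrl by (auto simp: admissible_def DV_def e)
qed

theorem proposition2p3:
  fixes T r \<rho> Cf :: real and a :: "real \<Rightarrow> real" and f0 :: "real \<Rightarrow> real \<Rightarrow> real"
    and U1 U2 :: "real \<Rightarrow> real"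
  assumes T: "T > 0" and r: "r > 0" and rho: "\<rho> > 0"
    and a_W12: "W12 T a" and a_nonneg: "\<forall>t\<in>{-T..0}. 0 \<le> a t" and a_T: "a (-T) = 0"
    and f0_concave: "concave_on ({0..} \<times> UNIV) (\<lambda>(x, y). f0 x y)"
    and f0_mono: "\<forall>x\<ge>0. mono (f0 x)"
    and f0_lip: "Cf-lipschitz_on ({0..} \<times> UNIV) (\<lambda>(x, y). f0 x y)"
    and f0_pos: "\<forall>y>0. f0 0 y > 0"
    and f0_ext: "\<forall>x<0. \<forall>y. f0 x y = f0 0 y"
    and U1_cont: "continuous_on {0..} U1"
    and U1_C2: "\<exists>U1' U1''. (\<forall>x>0. (U1 has_real_derivative U1' x) (at x)
                                 \<and> (U1' has_real_derivative U1'' x) (at x)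
                                 \<and> U1' x > 0 \<and> U1'' x < 0)
                 \<and> continuous_on {0<..} U1''
                 \<and> filterlim U1' at_top (at_right 0)"
    and U1_bdd: "bounded (U1 ` {0..})"
    and U2_cont: "continuous_on {0<..} U2"
    and U2_incr: "strict_mono_on {0<..} U2"
    and U2_concave: "concave_on {0<..} U2"
    and U2_bdd: "bdd_above (U2 ` {0<..})"
    and U2_int: "eint (\<lambda>t. exp (- \<rho> * t) * U2 (exp (- Cf * t))) {0..} > -\<infinity>"
  shows "Hpp T \<subseteq> DV T r \<rho> a f0 U1 U2 \<and>
         DV T r \<rho> a f0 U1 U2 = {\<eta> \<in> Hplus T. (\<lambda>_. 0) \<in> admissible T r a f0 \<eta>}"
proof -
  have family: "\<And>\<eta>1. L2 T \<eta>1 \<Longrightarrow> dde T r Cf a f0 \<eta>1"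
    by (rule dde_instance[OF T r a_W12 a_nonneg f0_lip f0_mono f0_ext f0_pos])
  have U2_mono: "\<And>x y. 0 < x \<Longrightarrow> x \<le> y \<Longrightarrow> U2 x \<le> U2 y"
    using strict_mono_on_leD[OF U2_incr] by auto
  have "DV T r \<rho> a f0 U1 U2 = {\<eta> \<in> Hplus T. (\<lambda>_. 0) \<in> admissible T r a f0 \<eta>}"
    using DV_subset_zero_admissible[OF family]
      zero_admissible_subset_DV[OF family rho U2_cont U2_mono U2_int] by blast
  thus ?thesis using Hpp_subset_zero_admissible[OF family] by blast
qed

end
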